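(* Let $G$ and $H$ be connected graphs with $|V(G)|\ge 3$ and $|V(H)|\ge 2$, such that at least one of $G$, $H$ is not complete. Then $$rx_3(G[H])\le rx_3(G)+rc(H).$$ In particular, if $\mathrm{diam}(G)=rx_3(G)$ and $H$ is complete, then $rx_3(G[H])=rx_3(G)+rc(H)$.
   Context: The lexicographic product $G[H]$ has vertex set $V(G)\times V(H)$, with $(g_1,h_1)$ and $(g_2,h_2)$ adjacent iff $g_1g_2\in E(G)$, or $g_1=g_2$ and $h_1h_2\in E(H)$. An edge coloring may give adjacent edges the same color. A path (tree) is rainbow if its edges have pairwise distinct colors. The rainbow connection number $rc(H)$ of a connected graph $H$ is the minimum number of colors in an edge coloring such that every two distinct vertices are joined by a rainbow path. For a connected graph on at least $3$ vertices, $rx_3$ is the minimum number of colors in an edge coloring such that every set of $3$ vertices lies in some rainbow tree. $\mathrm{diam}(G)$ is the diameter of $G$. *)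

theory Defs
  imports Main
begin

definition sgraph :: "'a set \<Rightarrow> 'a set set \<Rightarrow> bool" where
  "sgraph V E \<longleftrightarrow> finite V \<and> (\<forall>e\<in>E. \<exists>u v. u \<in> V \<and> v \<in> V \<and> u \<noteq> v \<and> e = {u, v})"

definition is_path :: "'a set \<Rightarrow> 'a set set \<Rightarrow> 'a list \<Rightarrow> bool" where
  "is_path V E xs \<longleftrightarrow> xs \<noteq> [] \<and> distinct xs \<and> set xs \<subseteq> V \<and>
     (\<forall>i. Suc i < length xs \<longrightarrow> {xs ! i, xs ! Suc i} \<in> E)"

definition path_edges :: "'a list \<Rightarrow> 'a set set" where
  "path_edges xs = {{xs ! i, xs ! Suc i} | i. Suc i < length xs}"

definition gconnected :: "'a set \<Rightarrow> 'a set set \<Rightarrow> bool" where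
  "gconnected V E \<longleftrightarrow> V \<noteq> {} \<and>
     (\<forall>u\<in>V. \<forall>v\<in>V. \<exists>xs. is_path V E xs \<and> hd xs = u \<and> last xs = v)"

definition is_cycle :: "'a set \<Rightarrow> 'a set set \<Rightarrow> 'a list \<Rightarrow> bool" where
  "is_cycle V E xs \<longleftrightarrow> length xs \<ge> 3 \<and> is_path V E xs \<and> {last xs, hd xs} \<in> E"

definition is_tree :: "'a set \<Rightarrow> 'a set set \<Rightarrow> bool" where
  "is_tree V E \<longleftrightarrow> sgraph V E \<and> gconnected V E \<and> \<not> (\<exists>xs. is_cycle V E xs)"

definition complete_graph :: "'a set \<Rightarrow> 'a set set \<Rightarrow> bool" where
  "complete_graph V E \<longleftrightarrow> (\<forall>u\<in>V. \<forall>v\<in>V. u \<noteq> v \<longrightarrow> {u, v} \<in> E)"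

definition rc :: "'a set \<Rightarrow> 'a set set \<Rightarrow> nat" where
  "rc V E = (LEAST k. \<exists>c :: 'a set \<Rightarrow> nat. (\<forall>e\<in>E. c e < k) \<and>
     (\<forall>u\<in>V. \<forall>v\<in>V. u \<noteq> v \<longrightarrow>
        (\<exists>xs. is_path V E xs \<and> hd xs = u \<and> last xs = v \<and> inj_on c (path_edges xs))))"

definition rx3 :: "'a set \<Rightarrow> 'a set set \<Rightarrow> nat" where
  "rx3 V E = (LEAST k. \<exists>c :: 'a set \<Rightarrow> nat. (\<forall>e\<in>E. c e < k) \<and>
     (\<forall>S. S \<subseteq> V \<and> card S = 3 \<longrightarrow>
        (\<exists>TV TE. TV \<subseteq> V \<and> TE \<subseteq> E \<and> is_tree TV TE \<and> S \<subseteq> TV \<and> inj_on c TE)))"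

definition gdist :: "'a set \<Rightarrow> 'a set set \<Rightarrow> 'a \<Rightarrow> 'a \<Rightarrow> nat" where
  "gdist V E u v = (LEAST n. \<exists>xs. is_path V E xs \<and> hd xs = u \<and> last xs = v \<and> length xs = Suc n)"

definition diam :: "'a set \<Rightarrow> 'a set set \<Rightarrow> nat" where
  "diam V E = Max {gdist V E u v | u v. u \<in> V \<and> v \<in> V}"

definition lex_edges :: "'a set \<Rightarrow> 'a set set \<Rightarrow> 'b set \<Rightarrow> 'b set set \<Rightarrow> ('a \<times> 'b) set set" where
  "lex_edges VG EG VH EH = {{(g1, h1), (g2, h2)} | g1 h1 g2 h2.
     g1 \<in> VG \<and> g2 \<in> VG \<and> h1 \<in> VH \<and> h2 \<in> VH \<and>
     ({g1, g2} \<in> EG \<or> (g1 = g2 \<and> {h1, h2} \<in> EH))}"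

end

theory Submission
  imports Defs
begin

(* Let c be a 3-rainbow colouring of G with k colours and c' a rainbow colouring of H with
   r colours. Colour an edge {(g,h),(g,h')} inside a fibre by k + c'{h,h'}, an edge
   {(g,h),(g',h')} with h != h' by c{g,g'}, and an edge {(g,h),(g',h)} by a colour below k
   other than c{g,g'}. Given three vertices, take a rainbow subtree of G through their first
   coordinates and lift it along walks in the complete graph on V(H), so that consecutive second
   coordinates differ and every lifted edge keeps its G-colour; the lift can be chosen to hit two
   of the three vertices exactly, and the third is reached by a rainbow path inside its fibre,
   whose colours are all at least k.
   Conversely, a rainbow tree of G[H] containing (u,h), (v,h) and (v,h') for a diametral pair
   u, v projects onto a walk from u to v and has at least diam(G) + 2 vertices, so
   diam(G) < rx3(G[H]); when H is complete, rc(H) = 1. *)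

definition adj :: "'v set set \<Rightarrow> ('v \<times> 'v) set" where
  "adj F = {(u, v). {u, v} \<in> F}"

lemma adj_iff [simp]: "(u, v) \<in> adj F \<longleftrightarrow> {u, v} \<in> F"
  by (simp add: adj_def)

lemma converse_adj [simp]: "(adj F)\<inverse> = adj F"
  by (auto simp: adj_def insert_commute)

lemma rtrancl_adj_sym: "(u, v) \<in> (adj F)\<^sup>* \<Longrightarrow> (v, u) \<in> (adj F)\<^sup>*"
  by (metis converse_adj converseI rtrancl_converse)

lemma adj_mono: "F \<subseteq> F' \<Longrightarrow> adj F \<subseteq> adj F'"
  by (auto simp: adj_def)

lemma rtrancl_adj_mono: "F \<subseteq> F' \<Longrightarrow> (u, v) \<in> (adj F)\<^sup>* \<Longrightarrow> (u, v) \<in> (adj F')\<^sup>*"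
  using rtrancl_mono[OF adj_mono] by blast

lemma path_edges_subset: "is_path V E xs \<Longrightarrow> path_edges xs \<subseteq> E"
  by (auto simp: is_path_def path_edges_def)

lemma rtrancl_adj_path_edges_nth:
  "i < length xs \<Longrightarrow> (xs ! 0, xs ! i) \<in> (adj (path_edges xs))\<^sup>*"
proof (induction i)
  case (Suc i)
  then have "(xs ! i, xs ! Suc i) \<in> adj (path_edges xs)"
    by (auto simp: path_edges_def)
  with Suc show ?case by (meson Suc_lessD rtrancl_into_rtrancl)
qed simp

lemma rtrancl_adj_path_edges: "xs \<noteq> [] \<Longrightarrow> (hd xs, last xs) \<in> (adj (path_edges xs))\<^sup>*"
  using rtrancl_adj_path_edges_nth[of "length xs - 1" xs] by (simp add: hd_conv_nth last_conv_nth)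

lemma is_path_rtrancl_adj:
  assumes "is_path V E xs"
  shows "(hd xs, last xs) \<in> (adj E)\<^sup>*"
  using rtrancl_adj_mono[OF path_edges_subset[OF assms] rtrancl_adj_path_edges] assms
  by (simp add: is_path_def)

lemma gconnected_rtrancl_adj:
  assumes "gconnected V E" "u \<in> V" "v \<in> V"
  shows "(u, v) \<in> (adj E)\<^sup>*"
proof -
  obtain xs where "is_path V E xs" "hd xs = u" "last xs = v"
    using assms unfolding gconnected_def by blast
  then show ?thesis using is_path_rtrancl_adj by blast
qed

lemma path_of_adj_relpow:
  assumes "(u, v) \<in> (adj F) ^^ n" "u \<in> V" "\<forall>e\<in>F. e \<subseteq> V"
  shows "\<exists>xs. is_path V F xs \<and> hd xs = u \<and> last xs = v \<and> length xs \<le> Suc n"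
  using assms(1)
proof (induction n arbitrary: v)
  case 0
  then show ?case using assms(2) by (auto simp: is_path_def intro!: exI[of _ "[u]"])
next
  case (Suc n)
  from Suc.prems obtain w where uw: "(u, w) \<in> (adj F) ^^ n" and wv: "{w, v} \<in> F" by auto
  from Suc.IH[OF uw] obtain xs
    where xs: "is_path V F xs" "hd xs = u" "last xs = w" "length xs \<le> Suc n" by blast
  have ne: "xs \<noteq> []" using xs(1) by (simp add: is_path_def)
  show ?case
  proof (cases "v \<in> set xs")
    case True
    then obtain i where i: "i < length xs" "xs ! i = v" by (auto simp: in_set_conv_nth)
    have "is_path V F (take (Suc i) xs)"
      using xs(1) by (auto simp: is_path_def dest: in_set_takeD)
    moreover have "hd (take (Suc i) xs) = u" using xs ne by simp
    moreover have "last (take (Suc i) xs) = v" using i by (simp add: take_Suc_conv_app_nth)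
    moreover have "length (take (Suc i) xs) \<le> Suc (Suc n)" using xs(4) by simp
    ultimately show ?thesis by blast
  next
    case False
    have "v \<in> V" using wv assms(3) by auto
    have "is_path V F (xs @ [v])"
      unfolding is_path_def
    proof (intro conjI allI impI)
      fix i assume i: "Suc i < length (xs @ [v])"
      show "{(xs @ [v]) ! i, (xs @ [v]) ! Suc i} \<in> F"
      proof (cases "Suc i < length xs")
        case True then show ?thesis using xs(1) by (simp add: is_path_def nth_append)
      next
        case False
        then have "i = length xs - 1" using i by simp
        then show ?thesis using wv xs(3) ne by (simp add: nth_append last_conv_nth)
      qed
    qed (use xs(1) False \<open>v \<in> V\<close> in \<open>auto simp: is_path_def\<close>)
    then show ?thesis using xs ne by (intro exI[of _ "xs @ [v]"]) simp
  qed
qed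

lemma path_of_adj_rtrancl:
  assumes "(u, v) \<in> (adj F)\<^sup>*" "u \<in> V" "\<forall>e\<in>F. e \<subseteq> V"
  shows "\<exists>xs. is_path V F xs \<and> hd xs = u \<and> last xs = v"
proof -
  obtain n where "(u, v) \<in> (adj F) ^^ n" using rtrancl_imp_relpow[OF assms(1)] ..
  from path_of_adj_relpow[OF this assms(2,3)] show ?thesis by blast
qed

lemma sgraph_edge_subset:
  assumes "sgraph V E" "e \<in> E"
  shows "e \<subseteq> V"
proof -
  obtain u v where "u \<in> V" "v \<in> V" "e = {u, v}" using assms unfolding sgraph_def by metis
  then show ?thesis by simp
qed

lemma sgraph_edge_neq:
  assumes "sgraph V E" "{a, b} \<in> E"
  shows "a \<noteq> b"
proof -
  obtain u v where "u \<noteq> v" "{a, b} = {u, v}" using assms unfolding sgraph_def by metis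
  then show ?thesis by (auto simp: doubleton_eq_iff)
qed

lemma sgraph_finite_edges:
  assumes "sgraph V E"
  shows "finite E"
proof (rule finite_subset)
  show "E \<subseteq> Pow V" using sgraph_edge_subset[OF assms] by blast
  show "finite (Pow V)" using assms by (simp add: sgraph_def)
qed

lemma sgraph_mono_edges: "sgraph V E \<Longrightarrow> F \<subseteq> E \<Longrightarrow> sgraph V F"
  unfolding sgraph_def by (meson subsetD)

lemma is_path_mono: "is_path TV TE xs \<Longrightarrow> TV \<subseteq> V \<Longrightarrow> TE \<subseteq> E \<Longrightarrow> is_path V E xs"
  unfolding is_path_def by blast

lemma path_edges_subset_set: "e \<in> path_edges xs \<Longrightarrow> e \<subseteq> set xs"
  by (auto simp: path_edges_def)

lemma distinct_path_edge_eqD: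
  assumes "distinct xs" "Suc i < length xs" "Suc j < length xs"
    and "{xs ! i, xs ! Suc i} = {xs ! j, xs ! Suc j}"
  shows "i = j"
proof -
  have "(xs ! i = xs ! j \<and> xs ! Suc i = xs ! Suc j) \<or> (xs ! i = xs ! Suc j \<and> xs ! Suc i = xs ! j)"
    using assms(4) by (auto simp: doubleton_eq_iff)
  then show ?thesis
    using assms(1-3) by (auto simp: nth_eq_iff_index_eq)
qed

lemma path_edges_takeE:
  assumes "e \<in> path_edges (take n xs)"
  obtains i where "Suc i < n" "Suc i < length xs" "e = {xs ! i, xs ! Suc i}"
  using assms by (auto simp: path_edges_def)

lemma path_edges_dropE:
  assumes "e \<in> path_edges (drop j xs)"
  obtains i where "j \<le> i" "Suc i < length xs" "e = {xs ! i, xs ! Suc i}"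
proof -
  obtain i where "Suc i < length xs - j" "e = {xs ! (j + i), xs ! Suc (j + i)}"
    using assms by (auto simp: path_edges_def)
  then show thesis using that[of "j + i"] by simp
qed

lemma path_edges_rev: "path_edges (rev xs) = path_edges xs"
proof -
  have "path_edges (rev ys) \<subseteq> path_edges ys" for ys :: "'a list"
  proof
    fix e assume "e \<in> path_edges (rev ys)"
    then obtain i where i: "e = {rev ys ! i, rev ys ! Suc i}" "Suc i < length ys"
      by (auto simp: path_edges_def)
    define j where "j = length ys - Suc (Suc i)"
    have "rev ys ! i = ys ! Suc j" "rev ys ! Suc i = ys ! j"
      using i(2) by (simp_all add: rev_nth j_def Suc_diff_Suc)
    then have "e = {ys ! j, ys ! Suc j}" using i(1) by (simp add: insert_commute)
    moreover have "Suc j < length ys" using i(2) by (simp add: j_def)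
    ultimately show "e \<in> path_edges ys" by (auto simp: path_edges_def)
  qed
  from this[of xs] this[of "rev xs"] show ?thesis by simp
qed

lemma is_path_rev:
  assumes "is_path V E xs" shows "is_path V E (rev xs)"
  unfolding is_path_def
proof (intro conjI allI impI)
  show "rev xs \<noteq> []" "distinct (rev xs)" "set (rev xs) \<subseteq> V" using assms by (auto simp: is_path_def)
  fix i assume i: "Suc i < length (rev xs)"
  have "{rev xs ! i, rev xs ! Suc i} \<in> path_edges (rev xs)" using i by (auto simp: path_edges_def)
  then have "{rev xs ! i, rev xs ! Suc i} \<in> path_edges xs" by (simp add: path_edges_rev)
  then show "{rev xs ! i, rev xs ! Suc i} \<in> E" using path_edges_subset[OF assms] by blast
qed

lemma is_path_take: "is_path V E xs \<Longrightarrow> 0 < n \<Longrightarrow> is_path V E (take n xs)"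
  unfolding is_path_def by (auto dest: in_set_takeD)

lemma is_path_drop: "is_path V E xs \<Longrightarrow> j < length xs \<Longrightarrow> is_path V E (drop j xs)"
  unfolding is_path_def by (auto dest: in_set_dropD)

section \<open>Trees\<close>

lemma cycle_closing_edge_notin_path_edges:
  assumes "is_cycle V E xs"
  shows "{last xs, hd xs} \<notin> path_edges xs"
proof
  have len: "length xs \<ge> 3" and dist: "distinct xs" using assms by (auto simp: is_cycle_def is_path_def)
  let ?n = "length xs - 1"
  have ne: "xs \<noteq> []" using len by auto
  then have hd_last: "hd xs = xs ! 0" "last xs = xs ! ?n" by (simp_all add: hd_conv_nth last_conv_nth)
  assume "{last xs, hd xs} \<in> path_edges xs"
  then obtain i where i: "Suc i < length xs" "{xs ! ?n, xs ! 0} = {xs ! i, xs ! Suc i}"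
    unfolding hd_last by (auto simp: path_edges_def)
  then consider "xs ! i = xs ! ?n" | "xs ! i = xs ! 0" "xs ! Suc i = xs ! ?n"
    by (auto simp: doubleton_eq_iff)
  then show False
  proof cases
    case 1
    then show False using i(1) len nth_eq_iff_index_eq[OF dist, of i ?n] by simp
  next
    case 2
    then have "i = 0" "Suc i = ?n"
      using i(1) len ne nth_eq_iff_index_eq[OF dist, of i 0] nth_eq_iff_index_eq[OF dist, of "Suc i" ?n] by simp_all
    then show False using len by simp
  qed
qed

lemma adj_subset_rtrancl_adj_Diff_cycle_edge:
  assumes cycle: "is_cycle V E xs"
  shows "adj E \<subseteq> (adj (E - {{last xs, hd xs}}))\<^sup>*"
proof
  let ?E' = "E - {{last xs, hd xs}}"
  have path: "is_path V E xs" and ne: "xs \<noteq> []" using cycle by (auto simp: is_cycle_def is_path_def)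
  have "path_edges xs \<subseteq> ?E'"
    using path_edges_subset[OF path] cycle_closing_edge_notin_path_edges[OF cycle] by blast
  from rtrancl_adj_mono[OF this rtrancl_adj_path_edges[OF ne]]
  have hl: "(hd xs, last xs) \<in> (adj ?E')\<^sup>*" .
  fix p assume "p \<in> adj E"
  then obtain a b where p: "p = (a, b)" "{a, b} \<in> E" by (cases p) auto
  show "p \<in> (adj ?E')\<^sup>*"
  proof (cases "{a, b} = {last xs, hd xs}")
    case True
    then have "(a, b) = (last xs, hd xs) \<or> (a, b) = (hd xs, last xs)"
      by (auto simp: doubleton_eq_iff)
    then show ?thesis using hl rtrancl_adj_sym[OF hl] unfolding p(1) by (elim disjE) simp_all
  next
    case False
    then show ?thesis using p by (simp add: r_into_rtrancl)
  qed
qed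

lemma gconnected_if_reachable:
  assumes "r \<in> V" "\<forall>e\<in>E. e \<subseteq> V" "\<forall>x\<in>V. (r, x) \<in> (adj E)\<^sup>*"
  shows "gconnected V E"
  unfolding gconnected_def
proof (intro conjI ballI)
  show "V \<noteq> {}" using assms(1) by blast
  fix u v assume "u \<in> V" "v \<in> V"
  then have "(u, r) \<in> (adj E)\<^sup>*" "(r, v) \<in> (adj E)\<^sup>*"
    using assms(3) rtrancl_adj_sym[of r u E] by auto
  then have "(u, v) \<in> (adj E)\<^sup>*" by (rule rtrancl_trans)
  then show "\<exists>xs. is_path V E xs \<and> hd xs = u \<and> last xs = v"
    by (rule path_of_adj_rtrancl[OF _ \<open>u \<in> V\<close> assms(2)])
qed

lemma no_cycle_if_card_minimal:
  assumes "finite E" and reach: "\<forall>x\<in>V. (r, x) \<in> (adj E)\<^sup>*"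
    and min: "\<And>E'. E' \<subseteq> E \<Longrightarrow> \<forall>x\<in>V. (r, x) \<in> (adj E')\<^sup>* \<Longrightarrow> card E \<le> card E'"
  shows "\<nexists>xs. is_cycle W E xs"
proof
  assume "\<exists>xs. is_cycle W E xs"
  then obtain xs where cycle: "is_cycle W E xs" ..
  let ?E' = "E - {{last xs, hd xs}}"
  have "(adj E)\<^sup>* \<subseteq> (adj ?E')\<^sup>*"
    using rtrancl_subset_rtrancl[OF adj_subset_rtrancl_adj_Diff_cycle_edge[OF cycle]] .
  then have "\<forall>x\<in>V. (r, x) \<in> (adj ?E')\<^sup>*" using reach by blast
  then have "card E \<le> card ?E'" by (intro min) auto
  moreover have "{last xs, hd xs} \<in> E" using cycle by (simp add: is_cycle_def)
  then have "card ?E' < card E" using \<open>finite E\<close> by (meson card_Diff1_less)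
  ultimately show False by simp
qed

lemma sgraph_restrict: "sgraph V E \<Longrightarrow> W \<subseteq> V \<Longrightarrow> \<forall>e\<in>E. e \<subseteq> W \<Longrightarrow> sgraph W E"
  unfolding sgraph_def by (metis finite_subset insert_subset)

lemma tree_containing_reachable:
  assumes sg: "sgraph V F" and r: "r \<in> V" and S: "\<forall>s\<in>S. (r, s) \<in> (adj F)\<^sup>*"
  shows "\<exists>TV TE. TV \<subseteq> V \<and> TE \<subseteq> F \<and> is_tree TV TE \<and> S \<subseteq> TV"
proof -
  define TV where "TV = {x. (r, x) \<in> (adj F)\<^sup>*}"
  define F0 where "F0 = {e\<in>F. e \<subseteq> TV}"
  have TV: "TV \<subseteq> V"
  proof
    fix x assume "x \<in> TV"
    then have "(r, x) \<in> (adj F)\<^sup>*" by (simp add: TV_def)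
    then show "x \<in> V" by induction (use r sgraph_edge_subset[OF sg] in auto)
  qed
  define spans where "spans TE \<longleftrightarrow> TE \<subseteq> F0 \<and> (\<forall>x\<in>TV. (r, x) \<in> (adj TE)\<^sup>*)" for TE
  have "spans F0"
    unfolding spans_def
  proof (intro conjI ballI)
    fix x assume "x \<in> TV"
    then have "(r, x) \<in> (adj F)\<^sup>*" by (simp add: TV_def)
    then show "(r, x) \<in> (adj F0)\<^sup>*"
    proof (induction rule: rtrancl_induct)
      case (step y z)
      have "(r, z) \<in> (adj F)\<^sup>*" using step(1,2) by (rule rtrancl_into_rtrancl)
      then have "{y, z} \<in> F0" using step by (auto simp: TV_def F0_def)
      then show ?case using step by (meson adj_iff rtrancl.simps)
    qed simp
  qed simp
  then obtain TE where TE: "spans TE" and min: "\<And>TE'. spans TE' \<Longrightarrow> card TE \<le> card TE'"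
    using ex_has_least_nat[of spans F0 card] by blast
  have TE_F0: "TE \<subseteq> F0" and reach: "\<forall>x\<in>TV. (r, x) \<in> (adj TE)\<^sup>*" using TE by (auto simp: spans_def)
  have TE_F: "TE \<subseteq> F" and TE_TV: "\<forall>e\<in>TE. e \<subseteq> TV" using TE_F0 by (auto simp: F0_def)
  have "sgraph TV TE" using sgraph_restrict[OF sgraph_mono_edges[OF sg TE_F] TV TE_TV] .
  moreover have "gconnected TV TE" using gconnected_if_reachable[OF _ TE_TV reach] by (simp add: TV_def)
  moreover have "\<nexists>xs. is_cycle TV TE xs"
  proof (rule no_cycle_if_card_minimal[OF _ reach])
    show "finite TE" using sgraph_finite_edges[OF sgraph_mono_edges[OF sg TE_F]] .
    show "card TE \<le> card TE'" if "TE' \<subseteq> TE" "\<forall>x\<in>TV. (r, x) \<in> (adj TE')\<^sup>*" for TE'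
      using min that TE_F0 unfolding spans_def by blast
  qed
  ultimately have "is_tree TV TE" by (simp add: is_tree_def)
  moreover have "S \<subseteq> TV" using S by (auto simp: TV_def)
  ultimately show ?thesis using TV TE_F by blast
qed

lemma card_le_Suc_card_edges_if_reachable:
  assumes finF: "finite F" and reach: "\<forall>x\<in>V. (r, x) \<in> (adj F)\<^sup>*"
  shows "card V \<le> card F + 1"
proof -
  let ?R = "adj F"
  define dist where "dist v = (LEAST n. (v, r) \<in> ?R ^^ n)" for v
  have dist: "(v, r) \<in> ?R ^^ dist v" if "v \<in> V" for v
  proof -
    have "(v, r) \<in> ?R\<^sup>*" using reach that rtrancl_adj_sym[of r v F] by blast
    then have "\<exists>n. (v, r) \<in> ?R ^^ n" by (rule rtrancl_imp_relpow)
    then show ?thesis unfolding dist_def by (rule LeastI_ex)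
  qed
  \<comment> \<open>every vertex other than r is sent to the first edge of a shortest walk to r;
    the distance to r strictly decreases along that edge, so this is injective\<close>
  define nxt where "nxt v = (SOME w. (v, w) \<in> ?R \<and> (w, r) \<in> ?R ^^ (dist v - 1))" for v
  have nxt: "(v, nxt v) \<in> ?R \<and> dist (nxt v) < dist v" if v: "v \<in> V" "v \<noteq> r" for v
  proof -
    obtain m where m: "dist v = Suc m"
      using dist[OF v(1)] v(2) by (cases "dist v") auto
    then have "\<exists>w. (v, w) \<in> ?R \<and> (w, r) \<in> ?R ^^ (dist v - 1)"
      using dist[OF v(1)] relpow_Suc_D2 by fastforce
    then have w: "(v, nxt v) \<in> ?R \<and> (nxt v, r) \<in> ?R ^^ (dist v - 1)"
      unfolding nxt_def by (rule someI_ex)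
    then have "dist (nxt v) \<le> dist v - 1" unfolding dist_def by (auto intro: Least_le)
    then show ?thesis using w m by auto
  qed
  define f where "f v = {v, nxt v}" for v
  have "inj_on f (V - {r})"
  proof (rule inj_onI)
    fix v w assume v: "v \<in> V - {r}" and w: "w \<in> V - {r}" and eq: "f v = f w"
    show "v = w"
    proof (rule ccontr)
      assume "v \<noteq> w"
      then have "v = nxt w" "w = nxt v" using eq by (auto simp: f_def doubleton_eq_iff)
      then show False using nxt[of v] nxt[of w] v w by auto
    qed
  qed
  moreover have "f ` (V - {r}) \<subseteq> F" using nxt by (auto simp: f_def)
  ultimately have "card (V - {r}) \<le> card F" using finF by (intro card_inj_on_le)
  moreover have "card V \<le> card (V - {r}) + 1"
    by (cases "finite V \<and> r \<in> V") (auto simp: card_Diff_singleton)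
  ultimately show ?thesis by linarith
qed

lemma is_tree_card_le:
  assumes "is_tree TV TE"
  shows "card TV \<le> card TE + 1"
proof (cases "TV = {}")
  case False
  then obtain r where r: "r \<in> TV" by blast
  have conn: "gconnected TV TE" and sg: "sgraph TV TE" using assms by (simp_all add: is_tree_def)
  have "\<forall>x\<in>TV. (r, x) \<in> (adj TE)\<^sup>*" using gconnected_rtrancl_adj[OF conn r] by blast
  with card_le_Suc_card_edges_if_reachable[OF sgraph_finite_edges[OF sg]] show ?thesis by blast
qed simp

lemma path_edges_take_Suc_drop_disjoint:
  assumes "distinct xs"
  shows "path_edges (take (Suc j) xs) \<inter> path_edges (drop j xs) = {}"
proof (rule ccontr)
  assume "path_edges (take (Suc j) xs) \<inter> path_edges (drop j xs) \<noteq> {}"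
  then obtain e where e1: "e \<in> path_edges (take (Suc j) xs)" and e2: "e \<in> path_edges (drop j xs)"
    by blast
  obtain i where i: "Suc i < Suc j" "Suc i < length xs" "e = {xs ! i, xs ! Suc i}"
    using e1 by (rule path_edges_takeE)
  obtain i' where i': "j \<le> i'" "Suc i' < length xs" "e = {xs ! i', xs ! Suc i'}"
    using e2 by (rule path_edges_dropE)
  have "i = i'" using distinct_path_edge_eqD[OF assms i(2) i'(2)] i(3) i'(3) by simp
  then show False using i(1) i'(1) by simp
qed

lemma path_edges_take_Suc_avoiding:
  assumes "\<forall>i<n. xs ! i \<notin> A" "e \<subseteq> A"
  shows "e \<notin> path_edges (take (Suc n) xs)"
proof
  assume "e \<in> path_edges (take (Suc n) xs)"
  then obtain i where "Suc i < Suc n" "e = {xs ! i, xs ! Suc i}" by (rule path_edges_takeE)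
  then show False using assms by simp
qed

lemma first_index_in:
  assumes "i < length xs" "xs ! i \<in> A"
  obtains n where "n < length xs" "xs ! n \<in> A" "\<forall>m<n. xs ! m \<notin> A"
proof -
  define n where "n = (LEAST n. n < length xs \<and> xs ! n \<in> A)"
  have "n < length xs \<and> xs ! n \<in> A" unfolding n_def by (rule LeastI[of _ i]) (use assms in simp)
  moreover have "xs ! m \<notin> A" if "m < n" for m
    using not_less_Least[of m "\<lambda>n. n < length xs \<and> xs ! n \<in> A"] that \<open>n < length xs \<and> _\<close>
    by (simp add: n_def)
  ultimately show thesis using that by blast
qed

lemma path_spider:
  assumes Q: "is_path V E Q" "hd Q = a1" "last Q = a2"
    and R: "is_path V E R" "hd R = a3" "last R = a1"
  obtains p l1 l2 l3 where
    "is_path V E l1" "is_path V E l2" "is_path V E l3"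
    "hd l1 = p" "hd l2 = p" "hd l3 = p" "last l1 = a1" "last l2 = a2" "last l3 = a3"
    "path_edges l1 \<inter> path_edges l2 = {}" "path_edges l1 \<inter> path_edges l3 = {}"
    "path_edges l2 \<inter> path_edges l3 = {}"
proof -
  have Qne: "Q \<noteq> []" and Rne: "R \<noteq> []" and dQ: "distinct Q"
    using Q(1) R(1) by (auto simp: is_path_def)
  \<comment> \<open>p is the first vertex of R on Q; Q is split at p, R is cut at p\<close>
  have "R ! (length R - 1) \<in> set Q"
    using Rne R(3) hd_in_set[OF Qne] Q(2) by (simp add: last_conv_nth)
  moreover have "length R - 1 < length R" using Rne by simp
  ultimately obtain n where n: "n < length R" "R ! n \<in> set Q" "\<forall>m<n. R ! m \<notin> set Q"
    using first_index_in by blast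
  define p where "p = R ! n"
  obtain j where j: "j < length Q" "Q ! j = p" using n(2) by (auto simp: p_def in_set_conv_nth)
  define l1 where "l1 = rev (take (Suc j) Q)"
  define l2 where "l2 = drop j Q"
  define l3 where "l3 = rev (take (Suc n) R)"
  have not_l3: "e \<notin> path_edges l3" if "e \<subseteq> set Q" for e
    using path_edges_take_Suc_avoiding[OF n(3) that] by (simp add: l3_def path_edges_rev)
  show thesis
  proof (rule that[of l1 l2 l3 p])
    show "is_path V E l1" unfolding l1_def by (intro is_path_rev is_path_take Q(1)) simp
    show "is_path V E l2" unfolding l2_def by (intro is_path_drop Q(1) j(1))
    show "is_path V E l3" unfolding l3_def by (intro is_path_rev is_path_take R(1)) simp
    show "hd l1 = p" using j by (simp add: l1_def hd_rev take_Suc_conv_app_nth)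
    show "hd l2 = p" using j by (simp add: l2_def hd_drop_conv_nth)
    show "hd l3 = p" using n by (simp add: l3_def hd_rev take_Suc_conv_app_nth p_def)
    show "last l1 = a1" using Qne Q(2) by (simp add: l1_def last_rev hd_conv_nth)
    show "last l2 = a2" using j Q(3) by (simp add: l2_def)
    show "last l3 = a3" using Rne R(2) by (simp add: l3_def last_rev hd_conv_nth)
    show "path_edges l1 \<inter> path_edges l2 = {}"
      using path_edges_take_Suc_drop_disjoint[OF dQ] by (simp add: l1_def l2_def path_edges_rev)
    have "e \<subseteq> set Q" if "e \<in> path_edges l1" for e
      using path_edges_subset_set[OF that] by (auto simp: l1_def dest: in_set_takeD)
    then show "path_edges l1 \<inter> path_edges l3 = {}" using not_l3 by blast
    have "e \<subseteq> set Q" if "e \<in> path_edges l2" for e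
      using path_edges_subset_set[OF that] by (auto simp: l2_def dest: in_set_dropD)
    then show "path_edges l2 \<inter> path_edges l3 = {}" using not_l3 by blast
  qed
qed

lemma ex_in_not_in_if_card_less: "finite B \<Longrightarrow> card B < card A \<Longrightarrow> \<exists>x\<in>A. x \<notin> B"
  by (meson card_mono not_le subsetI)

lemma ex_other_elem: "card A \<ge> 2 \<Longrightarrow> \<exists>y\<in>A. y \<noteq> x"
  using ex_in_not_in_if_card_less[of "{x}" A] by auto

lemma ex_elem_other_than_two:
  assumes "card A \<ge> 3"
  shows "\<exists>y\<in>A. y \<noteq> x \<and> y \<noteq> z"
proof -
  have "card {x, z} \<le> 2" by (cases "x = z") auto
  then show ?thesis using ex_in_not_in_if_card_less[of "{x, z}" A] assms by auto
qed

definition rainbow3_colouring :: "'a set \<Rightarrow> 'a set set \<Rightarrow> nat \<Rightarrow> ('a set \<Rightarrow> nat) \<Rightarrow> bool" where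
  "rainbow3_colouring V E k c \<longleftrightarrow> (\<forall>e\<in>E. c e < k) \<and>
     (\<forall>S. S \<subseteq> V \<and> card S = 3 \<longrightarrow>
        (\<exists>TV TE. TV \<subseteq> V \<and> TE \<subseteq> E \<and> is_tree TV TE \<and> S \<subseteq> TV \<and> inj_on c TE))"

definition rainbow_colouring :: "'a set \<Rightarrow> 'a set set \<Rightarrow> nat \<Rightarrow> ('a set \<Rightarrow> nat) \<Rightarrow> bool" where
  "rainbow_colouring V E k c \<longleftrightarrow> (\<forall>e\<in>E. c e < k) \<and>
     (\<forall>u\<in>V. \<forall>v\<in>V. u \<noteq> v \<longrightarrow>
        (\<exists>xs. is_path V E xs \<and> hd xs = u \<and> last xs = v \<and> inj_on c (path_edges xs)))"

lemma rainbow3_colouringE: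
  assumes "rainbow3_colouring V E k c" "S \<subseteq> V" "card S = 3"
  obtains TV TE where "TV \<subseteq> V" "TE \<subseteq> E" "is_tree TV TE" "S \<subseteq> TV" "inj_on c TE"
    "\<forall>e\<in>TE. c e < k"
proof -
  have "\<exists>TV TE. TV \<subseteq> V \<and> TE \<subseteq> E \<and> is_tree TV TE \<and> S \<subseteq> TV \<and> inj_on c TE"
    using assms unfolding rainbow3_colouring_def by blast
  moreover have "\<forall>e\<in>E. c e < k" using assms(1) by (simp add: rainbow3_colouring_def)
  ultimately show thesis using that by blast
qed

lemma rainbow_colouringE:
  assumes "rainbow_colouring V E k c" "u \<in> V" "v \<in> V"
  obtains xs where "is_path V E xs" "hd xs = u" "last xs = v" "inj_on c (path_edges xs)"
proof (cases "u = v")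
  case True
  have "is_path V E [u]" using assms(2) by (simp add: is_path_def)
  moreover have "path_edges [u] = {}" by (simp add: path_edges_def)
  ultimately show thesis using that True by simp
next
  case False
  then show thesis using assms that unfolding rainbow_colouring_def by blast
qed

lemma rx3_eq_Least: "rx3 V E = (LEAST k. \<exists>c. rainbow3_colouring V E k c)"
  by (simp add: rx3_def rainbow3_colouring_def)

lemma rc_eq_Least: "rc V E = (LEAST k. \<exists>c. rainbow_colouring V E k c)"
  by (simp add: rc_def rainbow_colouring_def)

lemma rx3_le: "rainbow3_colouring V E k c \<Longrightarrow> rx3 V E \<le> k"
  unfolding rx3_eq_Least by (rule Least_le) (rule exI)

lemma rainbow3_colouring_rx3:
  "rainbow3_colouring V E k c \<Longrightarrow> \<exists>c. rainbow3_colouring V E (rx3 V E) c"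
  unfolding rx3_eq_Least by (rule LeastI) (rule exI)

lemma rainbow_colouring_rc:
  "rainbow_colouring V E k c \<Longrightarrow> \<exists>c. rainbow_colouring V E (rc V E) c"
  unfolding rc_eq_Least by (rule LeastI) (rule exI)

lemma ex_inj_colouring: "finite E \<Longrightarrow> \<exists>(c :: 'a \<Rightarrow> nat) k. (\<forall>e\<in>E. c e < k) \<and> inj_on c E"
proof -
  assume "finite E"
  then obtain c :: "'a \<Rightarrow> nat" and k where "c ` E = {i. i < k}" "inj_on c E"
    using finite_imp_inj_to_nat_seg by metis
  then show ?thesis by blast
qed

lemma ex_rainbow3_colouring:
  assumes sg: "sgraph V E" and conn: "gconnected V E"
  shows "\<exists>k c. rainbow3_colouring V E k c"
proof -
  obtain c :: "'a set \<Rightarrow> nat" and k where c: "\<forall>e\<in>E. c e < k" "inj_on c E"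
    using ex_inj_colouring[OF sgraph_finite_edges[OF sg]] by blast
  have "\<exists>TV TE. TV \<subseteq> V \<and> TE \<subseteq> E \<and> is_tree TV TE \<and> S \<subseteq> TV \<and> inj_on c TE"
    if S: "S \<subseteq> V" "card S = 3" for S
  proof -
    obtain r where r: "r \<in> S" using S(2) by fastforce
    then have "\<forall>s\<in>S. (r, s) \<in> (adj E)\<^sup>*" using gconnected_rtrancl_adj[OF conn] S(1) by blast
    from tree_containing_reachable[OF sg _ this] obtain TV TE
      where "TV \<subseteq> V" "TE \<subseteq> E" "is_tree TV TE" "S \<subseteq> TV" using r S(1) by blast
    then show ?thesis using inj_on_subset[OF c(2)] by blast
  qed
  then have "rainbow3_colouring V E k c" using c(1) unfolding rainbow3_colouring_def by simp
  then show ?thesis by blast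
qed

lemma ex_rainbow_colouring:
  assumes sg: "sgraph V E" and conn: "gconnected V E"
  shows "\<exists>k c. rainbow_colouring V E k c"
proof -
  obtain c :: "'a set \<Rightarrow> nat" and k where c: "\<forall>e\<in>E. c e < k" "inj_on c E"
    using ex_inj_colouring[OF sgraph_finite_edges[OF sg]] by blast
  have "\<exists>xs. is_path V E xs \<and> hd xs = u \<and> last xs = v \<and> inj_on c (path_edges xs)"
    if uv: "u \<in> V" "v \<in> V" for u v
  proof -
    obtain xs where xs: "is_path V E xs" "hd xs = u" "last xs = v"
      using conn uv unfolding gconnected_def by meson
    with inj_on_subset[OF c(2) path_edges_subset[OF xs(1)]] show ?thesis by blast
  qed
  then have "rainbow_colouring V E k c" using c(1) unfolding rainbow_colouring_def by simp
  then show ?thesis by blast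
qed

lemma card_le_Suc_if_rainbow_tree:
  assumes "is_tree TV TE" "inj_on c TE" "\<forall>e\<in>TE. c e < (k :: nat)" "S \<subseteq> TV"
  shows "card S \<le> k + 1"
proof -
  have "finite TV" using assms(1) by (simp add: is_tree_def sgraph_def)
  then have "card S \<le> card TV" using assms(4) by (rule card_mono)
  also have "\<dots> \<le> card TE + 1" using assms(1) by (rule is_tree_card_le)
  also have "card TE = card (c ` TE)" using assms(2) by (simp add: card_image)
  also have "\<dots> \<le> card {..<k}" using assms(3) by (intro card_mono) auto
  finally show ?thesis by simp
qed

lemma two_le_if_rainbow3_colouring:
  assumes "rainbow3_colouring V E k c" "card V \<ge> 3"
  shows "2 \<le> k"
proof -
  obtain S where S: "S \<subseteq> V" "card S = 3" using obtain_subset_with_card_n[OF assms(2)] by metis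
  obtain TV TE where T: "TV \<subseteq> V" "TE \<subseteq> E" "is_tree TV TE" "S \<subseteq> TV" "inj_on c TE"
    "\<forall>e\<in>TE. c e < k"
    by (rule rainbow3_colouringE[OF assms(1) S])
  from card_le_Suc_if_rainbow_tree[OF T(3,5,6,4)] show ?thesis using S(2) by simp
qed

lemma rc_complete_graph:
  assumes complete: "complete_graph V E" and two: "card V \<ge> 2"
  shows "rc V E = 1"
  unfolding rc_eq_Least
proof (rule Least_equality)
  have "rainbow_colouring V E 1 (\<lambda>_. 0)"
    unfolding rainbow_colouring_def
  proof (intro conjI ballI impI)
    fix u v assume uv: "u \<in> V" "v \<in> V" "u \<noteq> v"
    have "is_path V E [u, v]"
      using uv complete unfolding complete_graph_def is_path_def by (auto simp: less_Suc_eq)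
    moreover have "path_edges [u, v] = {{u, v}}" by (auto simp: path_edges_def less_Suc_eq)
    ultimately show "\<exists>xs. is_path V E xs \<and> hd xs = u \<and> last xs = v \<and> inj_on (\<lambda>_. 0) (path_edges xs)"
      by (intro exI[of _ "[u, v]"]) simp
  qed simp
  then show "\<exists>c. rainbow_colouring V E 1 c" by blast
next
  fix k assume "\<exists>c. rainbow_colouring V E k c"
  then obtain c where c: "\<forall>e\<in>E. c e < k" by (auto simp: rainbow_colouring_def)
  obtain u where u: "u \<in> V" using two by fastforce
  obtain v where "v \<in> V" "u \<noteq> v" using ex_other_elem[OF two, of u] by auto
  then have "{u, v} \<in> E" using complete u unfolding complete_graph_def by blast
  then show "1 \<le> k" using c by fastforce
qed

section \<open>Walks in a complete graph\<close>

definition complete_walk :: "'b set \<Rightarrow> 'b list \<Rightarrow> nat \<Rightarrow> 'b \<Rightarrow> 'b \<Rightarrow> bool" where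
  "complete_walk V ys d s t \<longleftrightarrow> length ys = Suc d \<and> ys ! 0 = s \<and> ys ! d = t \<and> set ys \<subseteq> V \<and>
     (\<forall>i<d. ys ! i \<noteq> ys ! Suc i)"

lemma complete_walk_singleton: "s \<in> V \<Longrightarrow> complete_walk V [s] 0 s s"
  by (simp add: complete_walk_def)

lemma complete_walk_Cons:
  "complete_walk V ys d y t \<Longrightarrow> s \<in> V \<Longrightarrow> s \<noteq> y \<Longrightarrow> complete_walk V (s # ys) (Suc d) s t"
  unfolding complete_walk_def by (auto simp: nth_Cons split: nat.splits)

lemma ex_complete_walk:
  assumes "card V \<ge> 2" "s \<in> V"
  shows "\<exists>t ys. complete_walk V ys d s t"
  using assms(2)
proof (induction d arbitrary: s)
  case 0
  then show ?case using complete_walk_singleton[of s V] by blast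
next
  case (Suc d)
  obtain y where y: "y \<in> V" "y \<noteq> s" using ex_other_elem[OF assms(1)] by blast
  with Suc.IH obtain t ys where "complete_walk V ys d y t" by blast
  from complete_walk_Cons[OF this Suc.prems y(2)[symmetric]] show ?case by blast
qed

lemma ex_complete_walk_card_2:
  assumes two: "card V = 2" and s: "s \<in> V" and t: "t \<in> V" and parity: "(s = t) = even d"
  shows "\<exists>ys. complete_walk V ys d s t"
  using s parity
proof (induction d arbitrary: s)
  case 0
  then show ?case using complete_walk_singleton[of s V] by auto
next
  case (Suc d)
  obtain y where y: "y \<in> V" "y \<noteq> s" using ex_other_elem[of V s] two by auto
  have "V = {s, y}"
  proof (rule card_subset_eq[symmetric])
    show "finite V" using two card.infinite by fastforce
    show "{s, y} \<subseteq> V" using y Suc.prems(1) by blast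
    show "card {s, y} = card V" using two y(2) by simp
  qed
  then have "(y = t) = even d" using Suc.prems(2) y(2) t by auto
  with Suc.IH[OF y(1)] obtain ys where "complete_walk V ys d y t" by blast
  from complete_walk_Cons[OF this Suc.prems(1) y(2)[symmetric]] show ?case by blast
qed

lemma ex_complete_walk_card_ge_3:
  assumes three: "card V \<ge> 3" and s: "s \<in> V" and t: "t \<in> V"
    and d: "(d = 0 \<and> s = t) \<or> (d = 1 \<and> s \<noteq> t) \<or> d \<ge> 2"
  shows "\<exists>ys. complete_walk V ys d s t"
  using s d
proof (induction d arbitrary: s rule: less_induct)
  case (less d)
  consider "d = 0" | "d = 1" | "d \<ge> 2" by linarith
  then show ?case
  proof cases
    case 1
    then show ?thesis using less.prems complete_walk_singleton[of s V] by auto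
  next
    case 2
    then have "complete_walk V [s, t] 1 s t"
      using less.prems complete_walk_Cons[OF complete_walk_singleton[OF t]] by simp
    then show ?thesis using 2 by blast
  next
    case 3
    define d' where "d' = d - 1"
    have d': "d = Suc d'" "d' \<ge> 1" using 3 by (simp_all add: d'_def)
    obtain y where y: "y \<in> V" "y \<noteq> s" "y \<noteq> t" using ex_elem_other_than_two[OF three] by blast
    have "(d' = 0 \<and> y = t) \<or> (d' = 1 \<and> y \<noteq> t) \<or> d' \<ge> 2" using d'(2) y by auto
    with less.IH[of d' y] obtain ys where "complete_walk V ys d' y t" using d'(1) y(1) by auto
    from complete_walk_Cons[OF this less.prems(1) y(2)[symmetric]] show ?thesis using d'(1) by blast
  qed
qed

abbreviation complete_walkable :: "'b set \<Rightarrow> nat \<Rightarrow> 'b \<Rightarrow> 'b \<Rightarrow> bool" where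
  "complete_walkable V d s t \<equiv> \<exists>ys. complete_walk V ys d s t"

lemma complete_walks_from_two_targets:
  assumes two: "card V \<ge> 2" and L: "L \<in> V"
    and two_of: "complete_walkable V d1 L b1 \<and> complete_walkable V d2 L b2 \<or>
      complete_walkable V d1 L b1 \<and> complete_walkable V d3 L b3 \<or>
      complete_walkable V d2 L b2 \<and> complete_walkable V d3 L b3"
  obtains ys1 ys2 ys3 z1 z2 z3 where
    "complete_walk V ys1 d1 L z1" "complete_walk V ys2 d2 L z2" "complete_walk V ys3 d3 L z3"
    "(z1 = b1 \<and> z2 = b2) \<or> (z1 = b1 \<and> z3 = b3) \<or> (z2 = b2 \<and> z3 = b3)"
proof -
  obtain z1 ys1 z2 ys2 z3 ys3 where
    w: "complete_walk V ys1 d1 L z1" "complete_walk V ys2 d2 L z2" "complete_walk V ys3 d3 L z3"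
    using ex_complete_walk[OF two L] by metis
  from two_of show thesis
  proof (elim disjE conjE exE)
    fix ys ys' assume "complete_walk V ys d1 L b1" "complete_walk V ys' d2 L b2"
    then show thesis using that w(3) by blast
  next
    fix ys ys' assume "complete_walk V ys d1 L b1" "complete_walk V ys' d3 L b3"
    then show thesis using that w(2) by blast
  next
    fix ys ys' assume "complete_walk V ys d2 L b2" "complete_walk V ys' d3 L b3"
    then show thesis using that w(1) by blast
  qed
qed

lemma ex_start_two_of_three_card_2:
  assumes two: "card V = 2" and b: "b1 \<in> V" "b2 \<in> V" "b3 \<in> V"
  shows "\<exists>L\<in>V. complete_walkable V d1 L b1 \<and> complete_walkable V d2 L b2 \<or>
    complete_walkable V d1 L b1 \<and> complete_walkable V d3 L b3 \<or>
    complete_walkable V d2 L b2 \<and> complete_walkable V d3 L b3"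
proof -
  \<comment> \<open>the start of a walk of length d ending at b is b or the other vertex, by the parity of d;
    two of the three starts coincide\<close>
  define other where "other b = (SOME y. y \<in> V \<and> y \<noteq> b)" for b
  have "card V \<ge> 2" using two by simp
  then have other: "other b \<in> V \<and> other b \<noteq> b" for b
    unfolding other_def using ex_other_elem by (metis (mono_tags, lifting) someI_ex)
  define start where "start d b = (if even d then b else other b)" for d :: nat and b
  have start: "start d b \<in> V" if "b \<in> V" for d b using other that by (simp add: start_def)
  have walk: "complete_walkable V d (start d b) b" if "b \<in> V" for d b
    using ex_complete_walk_card_2[OF two start[OF that] that] other[of b] by (simp add: start_def)
  obtain u v where "V = {u, v}" using two by (meson card_2_iff)
  then have "start d1 b1 = start d2 b2 \<or> start d1 b1 = start d3 b3 \<or> start d2 b2 = start d3 b3"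
    using start[OF b(1), of d1] start[OF b(2), of d2] start[OF b(3), of d3] by auto
  then show ?thesis
  proof (elim disjE)
    assume "start d1 b1 = start d2 b2"
    then show ?thesis using start[OF b(1), of d1] walk[OF b(1), of d1] walk[OF b(2), of d2] by auto
  next
    assume "start d1 b1 = start d3 b3"
    then show ?thesis using start[OF b(1), of d1] walk[OF b(1), of d1] walk[OF b(3), of d3] by auto
  next
    assume "start d2 b2 = start d3 b3"
    then show ?thesis using start[OF b(2), of d2] walk[OF b(2), of d2] walk[OF b(3), of d3] by auto
  qed
qed

lemma ex_start_two_of_three_card_ge_3:
  assumes three: "card V \<ge> 3" and b: "b1 \<in> V" "b2 \<in> V" "b3 \<in> V"
    and nz: "\<not> (d1 = 0 \<and> d2 = 0)" "\<not> (d1 = 0 \<and> d3 = 0)" "\<not> (d2 = 0 \<and> d3 = 0)"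
  shows "\<exists>L\<in>V. complete_walkable V d1 L b1 \<and> complete_walkable V d2 L b2 \<or>
    complete_walkable V d1 L b1 \<and> complete_walkable V d3 L b3 \<or>
    complete_walkable V d2 L b2 \<and> complete_walkable V d3 L b3"
proof -
  have walk: "complete_walkable V d L b" if "d \<ge> 1" "L \<noteq> b" "L \<in> V" "b \<in> V" for d L b
  proof -
    have "d = 1 \<or> d \<ge> 2" using that(1) by linarith
    then show ?thesis using ex_complete_walk_card_ge_3[OF three that(3,4)] that(2) by blast
  qed
  \<comment> \<open>start anywhere off the two targets whose walks have positive length\<close>
  consider "d1 = 0" | "d2 = 0" | "d1 \<ge> 1" "d2 \<ge> 1" by linarith
  then show ?thesis
  proof cases
    case 1
    obtain L where L: "L \<in> V" "L \<noteq> b2" "L \<noteq> b3" using ex_elem_other_than_two[OF three] by blast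
    have "complete_walkable V d2 L b2" "complete_walkable V d3 L b3" using walk L b nz 1 by auto
    then show ?thesis using L(1) by blast
  next
    case 2
    obtain L where L: "L \<in> V" "L \<noteq> b1" "L \<noteq> b3" using ex_elem_other_than_two[OF three] by blast
    have "complete_walkable V d1 L b1" "complete_walkable V d3 L b3" using walk L b nz 2 by auto
    then show ?thesis using L(1) by blast
  next
    case 3
    obtain L where L: "L \<in> V" "L \<noteq> b1" "L \<noteq> b2" using ex_elem_other_than_two[OF three] by blast
    have "complete_walkable V d1 L b1" "complete_walkable V d2 L b2" using walk L b 3 by auto
    then show ?thesis using L(1) by blast
  qed
qed

lemma complete_walks_two_of_three:
  assumes two: "card V \<ge> 2" and b: "b1 \<in> V" "b2 \<in> V" "b3 \<in> V"
    and nz: "\<not> (d1 = 0 \<and> d2 = 0)" "\<not> (d1 = 0 \<and> d3 = 0)" "\<not> (d2 = 0 \<and> d3 = 0)"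
  obtains L ys1 ys2 ys3 z1 z2 z3 where "L \<in> V"
    "complete_walk V ys1 d1 L z1" "complete_walk V ys2 d2 L z2" "complete_walk V ys3 d3 L z3"
    "(z1 = b1 \<and> z2 = b2) \<or> (z1 = b1 \<and> z3 = b3) \<or> (z2 = b2 \<and> z3 = b3)"
proof -
  have "\<exists>L\<in>V. complete_walkable V d1 L b1 \<and> complete_walkable V d2 L b2 \<or>
      complete_walkable V d1 L b1 \<and> complete_walkable V d3 L b3 \<or>
      complete_walkable V d2 L b2 \<and> complete_walkable V d3 L b3"
  proof (cases "card V = 2")
    case True
    then show ?thesis by (rule ex_start_two_of_three_card_2[OF _ b])
  next
    case False
    then have "card V \<ge> 3" using two by simp
    then show ?thesis by (rule ex_start_two_of_three_card_ge_3[OF _ b nz])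
  qed
  then obtain L where L: "L \<in> V" and two_of: "complete_walkable V d1 L b1 \<and> complete_walkable V d2 L b2 \<or>
      complete_walkable V d1 L b1 \<and> complete_walkable V d3 L b3 \<or>
      complete_walkable V d2 L b2 \<and> complete_walkable V d3 L b3" ..
  obtain ys1 ys2 ys3 z1 z2 z3 where
    "complete_walk V ys1 d1 L z1" "complete_walk V ys2 d2 L z2" "complete_walk V ys3 d3 L z3"
    "(z1 = b1 \<and> z2 = b2) \<or> (z1 = b1 \<and> z3 = b3) \<or> (z2 = b2 \<and> z3 = b3)"
    by (rule complete_walks_from_two_targets[OF two L two_of])
  then show thesis by (rule that[OF L])
qed

lemma complete_walk_from_pair:
  assumes h: "h1 \<in> V" "h2 \<in> V" "h3 \<in> V" "h1 \<noteq> h2" and two: "card V \<ge> 2" and m: "m \<ge> 1"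
  obtains z ys where "z = h1 \<or> z = h2" "complete_walk V ys m z h3"
proof (cases "card V = 2")
  case True
  have "V = {h1, h2}"
  proof (rule card_subset_eq[symmetric])
    show "finite V" using True card.infinite by fastforce
    show "{h1, h2} \<subseteq> V" using h by blast
    show "card {h1, h2} = card V" using True h(4) by simp
  qed
  then have "(h1 = h3) = even m \<or> (h2 = h3) = even m" using h by auto
  then show thesis using ex_complete_walk_card_2[OF True _ h(3)] h(1,2) that by blast
next
  case False
  then have three: "card V \<ge> 3" using two by simp
  obtain z where z: "z = h1 \<or> z = h2" "z \<noteq> h3" using h(4) by metis
  moreover have "z \<in> V" using z(1) h by blast
  moreover have "(m = 0 \<and> z = h3) \<or> (m = 1 \<and> z \<noteq> h3) \<or> m \<ge> 2" using z(2) m by auto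
  ultimately have "\<exists>ys. complete_walk V ys m z h3"
    using ex_complete_walk_card_ge_3[OF three _ h(3)] by blast
  then show thesis using that z(1) by blast
qed

section \<open>A rainbow colouring of the lexicographic product\<close>

lemma lex_edges_sgraph:
  assumes sG: "sgraph VG EG" and sH: "sgraph VH EH"
  shows "sgraph (VG \<times> VH) (lex_edges VG EG VH EH)"
  unfolding sgraph_def
proof (intro conjI ballI)
  show "finite (VG \<times> VH)" using sG sH by (simp add: sgraph_def)
  fix e assume "e \<in> lex_edges VG EG VH EH"
  then obtain g1 h1 g2 h2 where e: "e = {(g1, h1), (g2, h2)}" "g1 \<in> VG" "g2 \<in> VG" "h1 \<in> VH" "h2 \<in> VH"
    "{g1, g2} \<in> EG \<or> (g1 = g2 \<and> {h1, h2} \<in> EH)" unfolding lex_edges_def by blast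
  have "(g1, h1) \<noteq> (g2, h2)" using e(6) sgraph_edge_neq[OF sG, of g1 g2] sgraph_edge_neq[OF sH, of h1 h2] by auto
  then show "\<exists>u v. u \<in> VG \<times> VH \<and> v \<in> VG \<times> VH \<and> u \<noteq> v \<and> e = {u, v}" using e by blast
qed

lemma lex_edges_fibreI:
  "g \<in> VG \<Longrightarrow> h \<in> VH \<Longrightarrow> h' \<in> VH \<Longrightarrow> {h, h'} \<in> EH \<Longrightarrow> {(g, h), (g, h')} \<in> lex_edges VG EG VH EH"
  unfolding lex_edges_def by blast

lemma lex_edges_crossI:
  "g \<in> VG \<Longrightarrow> g' \<in> VG \<Longrightarrow> h \<in> VH \<Longrightarrow> h' \<in> VH \<Longrightarrow> {g, g'} \<in> EG \<Longrightarrow>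
    {(g, h), (g', h')} \<in> lex_edges VG EG VH EH"
  unfolding lex_edges_def by blast

lemma lex_edges_fst:
  assumes "{x, y} \<in> lex_edges VG EG VH EH"
  shows "fst x = fst y \<or> {fst x, fst y} \<in> EG"
proof -
  obtain g1 h1 g2 h2 where e: "{x, y} = {(g1, h1), (g2, h2)}"
    "{g1, g2} \<in> EG \<or> (g1 = g2 \<and> {h1, h2} \<in> EH)" using assms unfolding lex_edges_def by blast
  then have "(x = (g1, h1) \<and> y = (g2, h2)) \<or> (x = (g2, h2) \<and> y = (g1, h1))"
    by (auto simp: doubleton_eq_iff)
  then show ?thesis using e(2) by (auto simp: insert_commute)
qed

text \<open>The kind of an edge is read off its projections: a single first coordinate means a fibre
  edge, a single second coordinate an edge between two fibres at the same level.\<close>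

definition lex_colour :: "nat \<Rightarrow> ('a set \<Rightarrow> nat) \<Rightarrow> ('b set \<Rightarrow> nat) \<Rightarrow> ('a \<times> 'b) set \<Rightarrow> nat" where
  "lex_colour k c c' e = (if card (fst ` e) = 1 then k + c' (snd ` e)
     else if card (snd ` e) = 1 then (if c (fst ` e) = 0 then 1 else 0) else c (fst ` e))"

lemma lex_colour_fibre: "h \<noteq> h' \<Longrightarrow> lex_colour k c c' {(g, h), (g, h')} = k + c' {h, h'}"
  by (simp add: lex_colour_def)

lemma lex_colour_cross: "g \<noteq> g' \<Longrightarrow> h \<noteq> h' \<Longrightarrow> lex_colour k c c' {(g, h), (g', h')} = c {g, g'}"
  by (simp add: lex_colour_def)

lemma lex_colour_level:
  "g \<noteq> g' \<Longrightarrow> lex_colour k c c' {(g, h), (g', h)} = (if c {g, g'} = 0 then 1 else 0)"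
  by (simp add: lex_colour_def)

lemma path_edges_zipE:
  assumes "e \<in> path_edges (zip xs ys)" "length ys = length xs"
  obtains i where "Suc i < length xs" "e = {(xs ! i, ys ! i), (xs ! Suc i, ys ! Suc i)}"
  using assms by (auto simp: path_edges_def)

lemma inj_on_Un_if_colours_separated:
  assumes "inj_on f A" "inj_on f B" "\<forall>x\<in>A. f x < (k :: nat)" "\<forall>x\<in>B. k \<le> f x"
  shows "inj_on f (A \<union> B)"
proof -
  have "f ` (A - B) \<inter> f ` (B - A) = {}" using assms(3,4) by fastforce
  then show ?thesis using assms(1,2) inj_on_Un by blast
qed

locale lex_colouring =
  fixes VG :: "'a set" and EG :: "'a set set" and VH :: "'b set" and EH :: "'b set set"
    and k :: nat and c :: "'a set \<Rightarrow> nat" and r :: nat and c' :: "'b set \<Rightarrow> nat"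
  assumes sgraph_G: "sgraph VG EG" and card_G: "card VG \<ge> 3"
    and sgraph_H: "sgraph VH EH" and card_H: "card VH \<ge> 2"
    and colouring_G: "rainbow3_colouring VG EG k c"
    and colouring_H: "rainbow_colouring VH EH r c'"
begin

abbreviation "LE \<equiv> lex_edges VG EG VH EH"

abbreviation "col \<equiv> lex_colour k c c'"

definition rainbow_joinable :: "('a \<times> 'b) set \<Rightarrow> bool" where
  "rainbow_joinable S \<longleftrightarrow>
     (\<exists>F \<subseteq> LE. inj_on col F \<and> (\<exists>x\<in>VG \<times> VH. \<forall>s\<in>S. (x, s) \<in> (adj F)\<^sup>*))"

lemma two_le_k: "2 \<le> k"
  using two_le_if_rainbow3_colouring[OF colouring_G card_G] .

lemma colour_G_less: "e \<in> EG \<Longrightarrow> c e < k"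
  using colouring_G by (simp add: rainbow3_colouring_def)

lemma G_rainbow_path:
  assumes "g \<in> VG" "g' \<in> VG" "g \<noteq> g'"
  obtains xs where "is_path VG EG xs" "hd xs = g" "last xs = g'" "inj_on c (path_edges xs)"
proof -
  obtain x where x: "x \<in> VG" "x \<noteq> g" "x \<noteq> g'" using ex_elem_other_than_two[OF card_G] by blast
  have "card {g, g', x} = 3" "{g, g', x} \<subseteq> VG" using x assms by auto
  then obtain TV TE where T: "TV \<subseteq> VG" "TE \<subseteq> EG" "is_tree TV TE" "{g, g', x} \<subseteq> TV" "inj_on c TE"
    using rainbow3_colouringE[OF colouring_G] by metis
  have "gconnected TV TE" using T(3) by (simp add: is_tree_def)
  then obtain xs where xs: "is_path TV TE xs" "hd xs = g" "last xs = g'"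
    using T(4) unfolding gconnected_def by blast
  show thesis
  proof (rule that)
    show "is_path VG EG xs" using is_path_mono[OF xs(1) T(1,2)] .
    show "inj_on c (path_edges xs)" using inj_on_subset[OF T(5) path_edges_subset[OF xs(1)]] .
  qed (use xs in simp_all)
qed

lemma G_neighbour:
  assumes "g \<in> VG"
  obtains g' where "g' \<in> VG" "g' \<noteq> g" "{g, g'} \<in> EG"
proof -
  obtain x where x: "x \<in> VG" "x \<noteq> g" using ex_other_elem[of VG g] card_G by auto
  obtain xs where xs: "is_path VG EG xs" "hd xs = g" "last xs = x"
    using G_rainbow_path[OF assms x(1) x(2)[symmetric]] by metis
  have ne: "xs \<noteq> []" and dist: "distinct xs" using xs(1) by (simp_all add: is_path_def)
  have "length xs \<noteq> 1"
  proof
    assume "length xs = 1"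
    then have "hd xs = last xs" by (cases xs) auto
    then show False using xs x by simp
  qed
  then have l2: "Suc 0 < length xs" using ne by (cases xs) auto
  show thesis
  proof (rule that)
    show "xs ! Suc 0 \<in> VG" using xs(1) l2 by (auto simp: is_path_def)
    have "xs ! Suc 0 \<noteq> xs ! 0" using nth_eq_iff_index_eq[OF dist l2] ne by simp
    then show "xs ! Suc 0 \<noteq> g" using xs(2) ne by (simp add: hd_conv_nth)
    have "{xs ! 0, xs ! Suc 0} \<in> EG" using xs(1) l2 by (simp add: is_path_def)
    with xs(2) ne show "{g, xs ! Suc 0} \<in> EG" by (simp add: hd_conv_nth)
  qed
qed

lemma lifted_leg:
  assumes p: "is_path VG EG xs" and inj: "inj_on c (path_edges xs)"
    and w: "complete_walk VH ys d s t" and len: "length xs = Suc d"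
  shows "path_edges (zip xs ys) \<subseteq> LE" "inj_on col (path_edges (zip xs ys))"
    "\<forall>e\<in>path_edges (zip xs ys). col e < k \<and> fst ` e \<in> path_edges xs \<and> col e = c (fst ` e)"
    "((xs ! 0, s), (xs ! d, t)) \<in> (adj (path_edges (zip xs ys)))\<^sup>*"
proof -
  have l: "length ys = length xs" "set ys \<subseteq> VH" "ys ! 0 = s" "ys ! d = t"
    "\<forall>i. Suc i < length xs \<longrightarrow> ys ! i \<noteq> ys ! Suc i"
    using w len by (auto simp: complete_walk_def)
  have edge: "e \<in> LE \<and> fst ` e \<in> path_edges xs \<and> col e = c (fst ` e) \<and> c (fst ` e) < k"
    if e: "e \<in> path_edges (zip xs ys)" for e
  proof -
    obtain i where i: "Suc i < length xs" "e = {(xs ! i, ys ! i), (xs ! Suc i, ys ! Suc i)}"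
      using e l(1) by (rule path_edges_zipE)
    have G: "xs ! i \<in> VG" "xs ! Suc i \<in> VG" "{xs ! i, xs ! Suc i} \<in> EG"
      using p i(1) by (auto simp: is_path_def)
    have neq: "xs ! i \<noteq> xs ! Suc i" "ys ! i \<noteq> ys ! Suc i"
      using p i(1) l(5) by (auto simp: is_path_def nth_eq_iff_index_eq)
    have H: "ys ! i \<in> VH" "ys ! Suc i \<in> VH" using l(1,2) i(1) by (auto dest: nth_mem)
    have "e \<in> LE" using lex_edges_crossI[OF G(1,2) H G(3)] i(2) by simp
    moreover have "col e = c {xs ! i, xs ! Suc i}" using lex_colour_cross[OF neq] i(2) by simp
    moreover have "{xs ! i, xs ! Suc i} \<in> path_edges xs" using i(1) by (auto simp: path_edges_def)
    moreover have "fst ` e = {xs ! i, xs ! Suc i}" using i(2) by simp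
    ultimately show ?thesis using colour_G_less[OF G(3)] by simp
  qed
  show "path_edges (zip xs ys) \<subseteq> LE" using edge by blast
  show "\<forall>e\<in>path_edges (zip xs ys). col e < k \<and> fst ` e \<in> path_edges xs \<and> col e = c (fst ` e)"
    using edge by simp
  show "inj_on col (path_edges (zip xs ys))"
  proof (rule inj_onI)
    fix e1 e2 assume e1: "e1 \<in> path_edges (zip xs ys)" and e2: "e2 \<in> path_edges (zip xs ys)"
      and eq: "col e1 = col e2"
    obtain i where i: "Suc i < length xs" "e1 = {(xs ! i, ys ! i), (xs ! Suc i, ys ! Suc i)}"
      using e1 l(1) by (rule path_edges_zipE)
    obtain j where j: "Suc j < length xs" "e2 = {(xs ! j, ys ! j), (xs ! Suc j, ys ! Suc j)}"
      using e2 l(1) by (rule path_edges_zipE)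
    have "fst ` e1 = fst ` e2" using inj eq edge[OF e1] edge[OF e2] by (metis inj_onD)
    then have "{xs ! i, xs ! Suc i} = {xs ! j, xs ! Suc j}" using i(2) j(2) by simp
    then have "i = j" using distinct_path_edge_eqD i(1) j(1) p by (auto simp: is_path_def)
    then show "e1 = e2" using i j by simp
  qed
  have "zip xs ys ! 0 = (xs ! 0, s)" "zip xs ys ! d = (xs ! d, t)" using l len by simp_all
  then show "((xs ! 0, s), (xs ! d, t)) \<in> (adj (path_edges (zip xs ys)))\<^sup>*"
    using rtrancl_adj_path_edges_nth[of d "zip xs ys"] l(1) len by simp
qed

lemma fibre_path:
  assumes p: "is_path VH EH zs" and inj: "inj_on c' (path_edges zs)" and g: "g \<in> VG"
  shows "path_edges (map (Pair g) zs) \<subseteq> LE" "inj_on col (path_edges (map (Pair g) zs))"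
    "\<forall>e\<in>path_edges (map (Pair g) zs). k \<le> col e"
    "((g, hd zs), (g, last zs)) \<in> (adj (path_edges (map (Pair g) zs)))\<^sup>*"
proof -
  have edge: "snd ` e \<in> path_edges zs \<and> col e = k + c' (snd ` e) \<and> e = Pair g ` snd ` e \<and> e \<in> LE"
    if e: "e \<in> path_edges (map (Pair g) zs)" for e
  proof -
    obtain i where i: "Suc i < length zs" "e = {(g, zs ! i), (g, zs ! Suc i)}"
      using e by (auto simp: path_edges_def)
    have "zs ! i \<noteq> zs ! Suc i" using p i(1) by (simp add: is_path_def nth_eq_iff_index_eq)
    moreover have "zs ! i \<in> VH" "zs ! Suc i \<in> VH" "{zs ! i, zs ! Suc i} \<in> EH"
      using p i(1) by (auto simp: is_path_def)
    ultimately show ?thesis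
      using i g lex_edges_fibreI lex_colour_fibre by (auto simp: path_edges_def)
  qed
  show "path_edges (map (Pair g) zs) \<subseteq> LE" using edge by blast
  show "\<forall>e\<in>path_edges (map (Pair g) zs). k \<le> col e" using edge by simp
  show "inj_on col (path_edges (map (Pair g) zs))"
  proof (rule inj_onI)
    fix e1 e2 assume e1: "e1 \<in> path_edges (map (Pair g) zs)" and e2: "e2 \<in> path_edges (map (Pair g) zs)"
      and "col e1 = col e2"
    then have "snd ` e1 = snd ` e2" using inj edge[OF e1] edge[OF e2] by (metis add_left_cancel inj_onD)
    then show "e1 = e2" using edge[OF e1] edge[OF e2] by metis
  qed
  have "zs \<noteq> []" using p by (simp add: is_path_def)
  then show "((g, hd zs), (g, last zs)) \<in> (adj (path_edges (map (Pair g) zs)))\<^sup>*"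
    using rtrancl_adj_path_edges[of "map (Pair g) zs"] by (simp add: hd_map last_map)
qed

lemma rainbow_joinable_one_fibre:
  assumes g: "g \<in> VG" and h: "h1 \<in> VH" "h2 \<in> VH" "h3 \<in> VH" and d: "h1 \<noteq> h3" "h2 \<noteq> h3"
  shows "rainbow_joinable {(g, h1), (g, h2), (g, h3)}"
proof -
  obtain g' where g': "g' \<in> VG" "g' \<noteq> g" "{g, g'} \<in> EG" using G_neighbour[OF g] by blast
  obtain zs where zs: "is_path VH EH zs" "hd zs = h1" "last zs = h2" "inj_on c' (path_edges zs)"
    using rainbow_colouringE[OF colouring_H h(1,2)] by blast
  note fibre = fibre_path[OF zs(1,4) g]
  \<comment> \<open>(g, h3) is joined to (g, h1) through (g', h3) by two edges of distinct colours below k\<close>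
  define e1 where "e1 = {(g, h3), (g', h3)}"
  define e2 where "e2 = {(g', h3), (g, h1)}"
  define F where "F = {e1, e2} \<union> path_edges (map (Pair g) zs)"
  have col_e1: "col e1 = (if c {g, g'} = 0 then 1 else 0)"
    unfolding e1_def using lex_colour_level[of g g' k c c' h3] g'(2) by metis
  have col_e2: "col e2 = c {g, g'}"
    unfolding e2_def using lex_colour_cross[of g' g h3 h1] g'(2) d(1) by (simp add: insert_commute)
  have "e1 \<noteq> e2" using d unfolding e1_def e2_def by (auto simp: doubleton_eq_iff)
  then have "inj_on col {e1, e2}" using col_e1 col_e2 by (auto simp: inj_on_def split: if_splits)
  moreover have "\<forall>e\<in>{e1, e2}. col e < k" using col_e1 col_e2 colour_G_less[OF g'(3)] two_le_k by auto
  ultimately have inj: "inj_on col F"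
    unfolding F_def by (rule inj_on_Un_if_colours_separated[OF _ fibre(2) _ fibre(3)])
  have "e1 \<in> LE" unfolding e1_def using lex_edges_crossI[OF g g'(1) h(3) h(3) g'(3)] .
  moreover have "e2 \<in> LE"
    unfolding e2_def using lex_edges_crossI[OF g'(1) g h(3) h(1)] g'(3) by (simp add: insert_commute)
  ultimately have "F \<subseteq> LE" unfolding F_def using fibre(1) by blast
  moreover have "((g, h1), (g, h2)) \<in> (adj F)\<^sup>*"
  proof -
    have "path_edges (map (Pair g) zs) \<subseteq> F" unfolding F_def by blast
    from rtrancl_adj_mono[OF this fibre(4)] show ?thesis using zs(2,3) by simp
  qed
  moreover have "((g, h1), (g, h3)) \<in> (adj F)\<^sup>*"
  proof -
    have "((g, h1), (g', h3)) \<in> adj F" "((g', h3), (g, h3)) \<in> adj F"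
      by (simp_all add: F_def e1_def e2_def insert_commute)
    then show ?thesis by (meson converse_rtrancl_into_rtrancl r_into_rtrancl)
  qed
  ultimately show ?thesis unfolding rainbow_joinable_def using inj g h(1) by blast
qed

lemma rainbow_joinable_two_fibres:
  assumes g: "g \<in> VG" "g' \<in> VG" "g \<noteq> g'" and h: "h1 \<in> VH" "h2 \<in> VH" "h3 \<in> VH" "h1 \<noteq> h2"
  shows "rainbow_joinable {(g, h1), (g, h2), (g', h3)}"
proof -
  obtain xs where xs: "is_path VG EG xs" "hd xs = g" "last xs = g'" "inj_on c (path_edges xs)"
    using G_rainbow_path[OF g] by blast
  have ne: "xs \<noteq> []" using xs(1) by (simp add: is_path_def)
  define m where "m = length xs - 1"
  have len: "length xs = Suc m" using ne by (simp add: m_def)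
  have "m \<noteq> 0"
  proof
    assume "m = 0"
    then have "hd xs = last xs" using len by (cases xs) auto
    then show False using xs g by simp
  qed
  then have "m \<ge> 1" by simp
  then obtain z ys where z: "z = h1 \<or> z = h2" and ys: "complete_walk VH ys m z h3"
    using complete_walk_from_pair[OF h card_H] by blast
  obtain zs where zs: "is_path VH EH zs" "hd zs = h1" "last zs = h2" "inj_on c' (path_edges zs)"
    using rainbow_colouringE[OF colouring_H h(1,2)] by blast
  note fibre = fibre_path[OF zs(1,4) g(1)]
  note leg = lifted_leg[OF xs(1,4) ys len]
  define F where "F = path_edges (zip xs ys) \<union> path_edges (map (Pair g) zs)"
  have leg_sub: "path_edges (zip xs ys) \<subseteq> F" and fibre_sub: "path_edges (map (Pair g) zs) \<subseteq> F"
    unfolding F_def by blast+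
  have "\<forall>e\<in>path_edges (zip xs ys). col e < k" using leg(3) by blast
  then have "inj_on col F"
    unfolding F_def by (rule inj_on_Un_if_colours_separated[OF leg(2) fibre(2) _ fibre(3)])
  moreover have "F \<subseteq> LE" using fibre(1) leg(1) by (simp add: F_def)
  moreover have h1_h2: "((g, h1), (g, h2)) \<in> (adj F)\<^sup>*"
    using rtrancl_adj_mono[OF fibre_sub fibre(4)] zs(2,3) by simp
  moreover have "((g, h1), (g', h3)) \<in> (adj F)\<^sup>*"
  proof -
    have "xs ! 0 = g" "xs ! m = g'" using xs(2,3) ne len by (simp_all add: hd_conv_nth last_conv_nth)
    then have "((g, z), (g', h3)) \<in> (adj F)\<^sup>*" using rtrancl_adj_mono[OF leg_sub leg(4)] by simp
    moreover have "((g, h1), (g, z)) \<in> (adj F)\<^sup>*" using z h1_h2 by auto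
    ultimately show ?thesis by (meson rtrancl_trans)
  qed
  ultimately show ?thesis unfolding rainbow_joinable_def using g(1) h(1) by blast
qed

lemma rainbow_joinable_insert_via_fibre:
  assumes F: "F \<subseteq> LE" "inj_on col F" "\<forall>e\<in>F. col e < k"
    and x: "x \<in> VG \<times> VH" "\<forall>s\<in>P. (x, s) \<in> (adj F)\<^sup>*" "(x, (g, h)) \<in> (adj F)\<^sup>*"
    and g: "g \<in> VG" and h: "h \<in> VH" "h' \<in> VH"
  shows "rainbow_joinable (insert (g, h') P)"
proof -
  obtain zs where zs: "is_path VH EH zs" "hd zs = h" "last zs = h'" "inj_on c' (path_edges zs)"
    using rainbow_colouringE[OF colouring_H h] by blast
  note fibre = fibre_path[OF zs(1,4) g]
  define F' where "F' = F \<union> path_edges (map (Pair g) zs)"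
  have sub: "F \<subseteq> F'" "path_edges (map (Pair g) zs) \<subseteq> F'" unfolding F'_def by blast+
  have "F' \<subseteq> LE" unfolding F'_def using F(1) fibre(1) by blast
  moreover have "inj_on col F'"
    unfolding F'_def by (rule inj_on_Un_if_colours_separated[OF F(2) fibre(2) F(3) fibre(3)])
  moreover have "(x, (g, h')) \<in> (adj F')\<^sup>*"
  proof -
    have "((g, h), (g, h')) \<in> (adj F')\<^sup>*" using rtrancl_adj_mono[OF sub(2) fibre(4)] zs(2,3) by simp
    with rtrancl_adj_mono[OF sub(1) x(3)] show ?thesis by (rule rtrancl_trans)
  qed
  moreover have "\<forall>s\<in>P. (x, s) \<in> (adj F')\<^sup>*" using x(2) rtrancl_adj_mono[OF sub(1)] by auto
  ultimately show ?thesis unfolding rainbow_joinable_def using x(1) by blast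
qed

lemma G_rainbow_spider:
  assumes a: "a1 \<in> VG" "a2 \<in> VG" "a3 \<in> VG" "a1 \<noteq> a2" "a1 \<noteq> a3" "a2 \<noteq> a3"
  obtains p l1 l2 l3 where "is_path VG EG l1" "is_path VG EG l2" "is_path VG EG l3"
    "hd l1 = p" "hd l2 = p" "hd l3 = p" "last l1 = a1" "last l2 = a2" "last l3 = a3"
    "path_edges l1 \<inter> path_edges l2 = {}" "path_edges l1 \<inter> path_edges l3 = {}"
    "path_edges l2 \<inter> path_edges l3 = {}"
    "inj_on c (path_edges l1 \<union> path_edges l2 \<union> path_edges l3)"
proof -
  have "card {a1, a2, a3} = 3" "{a1, a2, a3} \<subseteq> VG" using a by auto
  then obtain TV TE where T: "TV \<subseteq> VG" "TE \<subseteq> EG" "is_tree TV TE" "{a1, a2, a3} \<subseteq> TV" "inj_on c TE"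
    using rainbow3_colouringE[OF colouring_G] by metis
  have conn: "gconnected TV TE" using T(3) by (simp add: is_tree_def)
  have "a1 \<in> TV" "a2 \<in> TV" "a3 \<in> TV" using T(4) by auto
  then obtain Q R where Q: "is_path TV TE Q" "hd Q = a1" "last Q = a2"
    and R: "is_path TV TE R" "hd R = a3" "last R = a1"
    using conn unfolding gconnected_def by metis
  obtain p l1 l2 l3 where l: "is_path TV TE l1" "is_path TV TE l2" "is_path TV TE l3"
    "hd l1 = p" "hd l2 = p" "hd l3 = p" "last l1 = a1" "last l2 = a2" "last l3 = a3"
    "path_edges l1 \<inter> path_edges l2 = {}" "path_edges l1 \<inter> path_edges l3 = {}"
    "path_edges l2 \<inter> path_edges l3 = {}"
    by (rule path_spider[OF Q R])
  have "path_edges l1 \<union> path_edges l2 \<union> path_edges l3 \<subseteq> TE"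
    using path_edges_subset[OF l(1)] path_edges_subset[OF l(2)] path_edges_subset[OF l(3)] by blast
  from inj_on_subset[OF T(5) this]
  show thesis by (rule that[OF is_path_mono[OF l(1) T(1,2)] is_path_mono[OF l(2) T(1,2)]
        is_path_mono[OF l(3) T(1,2)] l(4-12)])
qed

lemma inj_on_col_lifted_legs:
  assumes l: "is_path VG EG l1" "is_path VG EG l2" "is_path VG EG l3"
    and disj: "path_edges l1 \<inter> path_edges l2 = {}" "path_edges l1 \<inter> path_edges l3 = {}"
      "path_edges l2 \<inter> path_edges l3 = {}"
    and inj: "inj_on c (path_edges l1 \<union> path_edges l2 \<union> path_edges l3)"
    and w: "complete_walk VH ys1 d1 s1 t1" "complete_walk VH ys2 d2 s2 t2" "complete_walk VH ys3 d3 s3 t3"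
    and len: "length l1 = Suc d1" "length l2 = Suc d2" "length l3 = Suc d3"
  shows "inj_on col (path_edges (zip l1 ys1) \<union> path_edges (zip l2 ys2) \<union> path_edges (zip l3 ys3))"
    (is "inj_on col (?F1 \<union> ?F2 \<union> ?F3)")
proof (rule inj_onI)
  have "inj_on c (path_edges l1)" "inj_on c (path_edges l2)" "inj_on c (path_edges l3)"
    by (rule inj_on_subset[OF inj], blast)+
  note leg1 = lifted_leg[OF l(1) this(1) w(1) len(1)]
    and leg2 = lifted_leg[OF l(2) this(2) w(2) len(2)]
    and leg3 = lifted_leg[OF l(3) this(3) w(3) len(3)]
  fix e e' assume e: "e \<in> ?F1 \<union> ?F2 \<union> ?F3" and e': "e' \<in> ?F1 \<union> ?F2 \<union> ?F3" and eq: "col e = col e'"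
  \<comment> \<open>an opaque name for the projection keeps blast from unfolding the image\<close>
  define proj :: "('a \<times> 'b) set \<Rightarrow> 'a set" where "proj x = fst ` x" for x
  have p1: "\<forall>x\<in>?F1. col x = c (proj x) \<and> proj x \<in> path_edges l1" using leg1(3) by (simp add: proj_def)
  have p2: "\<forall>x\<in>?F2. col x = c (proj x) \<and> proj x \<in> path_edges l2" using leg2(3) by (simp add: proj_def)
  have p3: "\<forall>x\<in>?F3. col x = c (proj x) \<and> proj x \<in> path_edges l3" using leg3(3) by (simp add: proj_def)
  have "c (proj e) = c (proj e')" "proj e \<in> path_edges l1 \<union> path_edges l2 \<union> path_edges l3"
    "proj e' \<in> path_edges l1 \<union> path_edges l2 \<union> path_edges l3"
    using e e' eq p1 p2 p3 by auto
  then have proj_eq: "proj e = proj e'" by (rule inj_onD[OF inj])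
  have e'_leg: "e' \<in> ?F1 \<or> e' \<in> ?F2 \<or> e' \<in> ?F3" using e' by blast
  from e show "e = e'"
  proof (elim UnE)
    assume e1: "e \<in> ?F1"
    then have "proj e' \<in> path_edges l1" using p1 proj_eq by metis
    then have "e' \<in> ?F1" using e'_leg p2 p3 disj(1,2) by (metis disjoint_iff)
    then show ?thesis using inj_onD[OF leg1(2) eq e1] by blast
  next
    assume e2: "e \<in> ?F2"
    then have "proj e' \<in> path_edges l2" using p2 proj_eq by metis
    then have "e' \<in> ?F2" using e'_leg p1 p3 disj(1,3) by (metis disjoint_iff)
    then show ?thesis using inj_onD[OF leg2(2) eq e2] by blast
  next
    assume e3: "e \<in> ?F3"
    then have "proj e' \<in> path_edges l3" using p3 proj_eq by metis
    then have "e' \<in> ?F3" using e'_leg p1 p2 disj(2,3) by (metis disjoint_iff)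
    then show ?thesis using inj_onD[OF leg3(2) eq e3] by blast
  qed
qed

lemma lifted_legs:
  assumes l: "is_path VG EG l1" "is_path VG EG l2" "is_path VG EG l3"
    and disj: "path_edges l1 \<inter> path_edges l2 = {}" "path_edges l1 \<inter> path_edges l3 = {}"
      "path_edges l2 \<inter> path_edges l3 = {}"
    and inj: "inj_on c (path_edges l1 \<union> path_edges l2 \<union> path_edges l3)"
    and w: "complete_walk VH ys1 d1 L z1" "complete_walk VH ys2 d2 L z2" "complete_walk VH ys3 d3 L z3"
    and len: "length l1 = Suc d1" "length l2 = Suc d2" "length l3 = Suc d3"
  defines "F \<equiv> path_edges (zip l1 ys1) \<union> path_edges (zip l2 ys2) \<union> path_edges (zip l3 ys3)"
  shows "F \<subseteq> LE" "inj_on col F" "\<forall>e\<in>F. col e < k"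
    "((l1 ! 0, L), (l1 ! d1, z1)) \<in> (adj F)\<^sup>*" "((l2 ! 0, L), (l2 ! d2, z2)) \<in> (adj F)\<^sup>*"
    "((l3 ! 0, L), (l3 ! d3, z3)) \<in> (adj F)\<^sup>*"
proof -
  have "inj_on c (path_edges l1)" "inj_on c (path_edges l2)" "inj_on c (path_edges l3)"
    by (rule inj_on_subset[OF inj], blast)+
  note leg1 = lifted_leg[OF l(1) this(1) w(1) len(1)]
    and leg2 = lifted_leg[OF l(2) this(2) w(2) len(2)]
    and leg3 = lifted_leg[OF l(3) this(3) w(3) len(3)]
  show "F \<subseteq> LE" using leg1(1) leg2(1) leg3(1) by (auto simp: F_def)
  show "\<forall>e\<in>F. col e < k" using leg1(3) leg2(3) leg3(3) by (auto simp: F_def)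
  show "inj_on col F" unfolding F_def by (rule inj_on_col_lifted_legs[OF l disj inj w len])
  have "path_edges (zip l1 ys1) \<subseteq> F" "path_edges (zip l2 ys2) \<subseteq> F" "path_edges (zip l3 ys3) \<subseteq> F"
    unfolding F_def by blast+
  then show "((l1 ! 0, L), (l1 ! d1, z1)) \<in> (adj F)\<^sup>*" "((l2 ! 0, L), (l2 ! d2, z2)) \<in> (adj F)\<^sup>*"
    "((l3 ! 0, L), (l3 ! d3, z3)) \<in> (adj F)\<^sup>*"
    using rtrancl_adj_mono[OF _ leg1(4)] rtrancl_adj_mono[OF _ leg2(4)] rtrancl_adj_mono[OF _ leg3(4)]
    by blast+
qed

lemma rainbow_joinable_three_fibres:
  assumes a: "a1 \<in> VG" "a2 \<in> VG" "a3 \<in> VG" "a1 \<noteq> a2" "a1 \<noteq> a3" "a2 \<noteq> a3"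
    and b: "b1 \<in> VH" "b2 \<in> VH" "b3 \<in> VH"
  shows "rainbow_joinable {(a1, b1), (a2, b2), (a3, b3)}"
proof -
  obtain p l1 l2 l3 where l: "is_path VG EG l1" "is_path VG EG l2" "is_path VG EG l3"
    "hd l1 = p" "hd l2 = p" "hd l3 = p" "last l1 = a1" "last l2 = a2" "last l3 = a3"
    "path_edges l1 \<inter> path_edges l2 = {}" "path_edges l1 \<inter> path_edges l3 = {}"
    "path_edges l2 \<inter> path_edges l3 = {}"
    and inj: "inj_on c (path_edges l1 \<union> path_edges l2 \<union> path_edges l3)"
    by (rule G_rainbow_spider[OF a])
  have ne: "l1 \<noteq> []" "l2 \<noteq> []" "l3 \<noteq> []" using l(1-3) by (auto simp: is_path_def)
  define d1 d2 d3 where "d1 = length l1 - 1" and "d2 = length l2 - 1" and "d3 = length l3 - 1"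
  have len: "length l1 = Suc d1" "length l2 = Suc d2" "length l3 = Suc d3"
    using ne by (simp_all add: d1_def d2_def d3_def)
  have ends: "l1 ! 0 = p" "l2 ! 0 = p" "l3 ! 0 = p" "l1 ! d1 = a1" "l2 ! d2 = a2" "l3 ! d3 = a3"
    using l(4-9) ne len by (simp_all add: hd_conv_nth last_conv_nth)
  have "d1 = 0 \<Longrightarrow> a1 = p" "d2 = 0 \<Longrightarrow> a2 = p" "d3 = 0 \<Longrightarrow> a3 = p" using ends by auto
  then have nz: "\<not> (d1 = 0 \<and> d2 = 0)" "\<not> (d1 = 0 \<and> d3 = 0)" "\<not> (d2 = 0 \<and> d3 = 0)"
    using a(4-6) by auto
  obtain L ys1 ys2 ys3 z1 z2 z3 where L: "L \<in> VH"
    and w: "complete_walk VH ys1 d1 L z1" "complete_walk VH ys2 d2 L z2" "complete_walk VH ys3 d3 L z3"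
    and two_of: "(z1 = b1 \<and> z2 = b2) \<or> (z1 = b1 \<and> z3 = b3) \<or> (z2 = b2 \<and> z3 = b3)"
    by (rule complete_walks_two_of_three[OF card_H b nz])
  have z: "z1 \<in> VH" "z2 \<in> VH" "z3 \<in> VH" using w len by (auto simp: complete_walk_def)
  note legs = lifted_legs[OF l(1-3,10-12) inj w len]
  note reach = legs(4-6)[unfolded ends]
  have root: "(p, L) \<in> VG \<times> VH" using l(1,4) ne(1) L by (auto simp: is_path_def)
  \<comment> \<open>two of the three vertices are reached; a fibre path, with colours at least k, reaches the third\<close>
  note insert_via_fibre = rainbow_joinable_insert_via_fibre[OF legs(1-3) root]
  from two_of show ?thesis
  proof (elim disjE conjE)
    assume "z1 = b1" "z2 = b2"
    then show ?thesis using insert_via_fibre[of "{(a1, b1), (a2, b2)}", OF _ reach(3) a(3) z(3) b(3)] reach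
      by (simp add: insert_commute)
  next
    assume "z1 = b1" "z3 = b3"
    then show ?thesis using insert_via_fibre[of "{(a1, b1), (a3, b3)}", OF _ reach(2) a(2) z(2) b(2)] reach
      by (simp add: insert_commute)
  next
    assume "z2 = b2" "z3 = b3"
    then show ?thesis using insert_via_fibre[of "{(a2, b2), (a3, b3)}", OF _ reach(1) a(1) z(1) b(1)] reach
      by simp
  qed
qed

lemma rainbow_joinable_3set:
  assumes S: "S \<subseteq> VG \<times> VH" "card S = 3"
  shows "rainbow_joinable S"
proof -
  obtain x y z where xyz: "S = {x, y, z}" "x \<noteq> y" "y \<noteq> z" "x \<noteq> z" using S(2) card_3_iff by metis
  obtain g1 h1 g2 h2 g3 h3 where x: "x = (g1, h1)" and y: "y = (g2, h2)" and z: "z = (g3, h3)"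
    by (cases x, cases y, cases z) blast
  have V: "g1 \<in> VG" "g2 \<in> VG" "g3 \<in> VG" "h1 \<in> VH" "h2 \<in> VH" "h3 \<in> VH"
    using S(1) xyz(1) x y z by auto
  consider "g1 = g2" "g1 = g3" | "g1 = g2" "g1 \<noteq> g3" | "g1 \<noteq> g2" "g1 = g3" | "g2 = g3" "g1 \<noteq> g2"
    | "g1 \<noteq> g2" "g1 \<noteq> g3" "g2 \<noteq> g3" by blast
  then show ?thesis
  proof cases
    case 1
    then show ?thesis using rainbow_joinable_one_fibre[OF V(1,4-6)] xyz x y z by simp
  next
    case 2
    then show ?thesis using rainbow_joinable_two_fibres[OF V(1,3) 2(2) V(4-6)] xyz x y z by simp
  next
    case 3
    then have "rainbow_joinable {(g1, h1), (g1, h3), (g2, h2)}"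
      using rainbow_joinable_two_fibres[OF V(1,2) 3(1) V(4,6,5)] xyz x z by simp
    then show ?thesis using xyz(1) x y z 3 by (simp add: insert_commute)
  next
    case 4
    then have "rainbow_joinable {(g2, h2), (g2, h3), (g1, h1)}"
      using rainbow_joinable_two_fibres[OF V(2,1) 4(2)[symmetric] V(5,6,4)] xyz y z by simp
    then show ?thesis using xyz(1) x y z 4 by (simp add: insert_commute)
  next
    case 5
    then show ?thesis using rainbow_joinable_three_fibres[OF V(1-3) 5 V(4-6)] xyz x y z by simp
  qed
qed

lemma lex_colour_less: "e \<in> LE \<Longrightarrow> col e < k + r"
proof -
  assume "e \<in> LE"
  then obtain g1 h1 g2 h2 where e: "e = {(g1, h1), (g2, h2)}"
    "{g1, g2} \<in> EG \<or> (g1 = g2 \<and> {h1, h2} \<in> EH)" unfolding lex_edges_def by blast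
  show "col e < k + r"
  proof (cases "{g1, g2} \<in> EG")
    case True
    then have g: "g1 \<noteq> g2" by (rule sgraph_edge_neq[OF sgraph_G])
    show ?thesis
    proof (cases "h1 = h2")
      case True
      then show ?thesis using e(1) lex_colour_level[OF g, of k c c' h1] two_le_k by simp
    next
      case False
      then show ?thesis
        using e(1) lex_colour_cross[OF g False, of k c c'] colour_G_less[OF \<open>{g1, g2} \<in> EG\<close>] by simp
    qed
  next
    case False
    then have "g1 = g2" "{h1, h2} \<in> EH" using e(2) by auto
    moreover have "c' {h1, h2} < r" using colouring_H \<open>{h1, h2} \<in> EH\<close> by (simp add: rainbow_colouring_def)
    ultimately show ?thesis
      using e(1) lex_colour_fibre[OF sgraph_edge_neq[OF sgraph_H], of h1 h2 k c c' g1] by simp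
  qed
qed

lemma rainbow3_colouring_lex: "rainbow3_colouring (VG \<times> VH) LE (k + r) col"
  unfolding rainbow3_colouring_def
proof (intro conjI allI impI ballI)
  show "col e < k + r" if "e \<in> LE" for e using lex_colour_less[OF that] .
  fix S assume S: "S \<subseteq> VG \<times> VH \<and> card S = 3"
  then have "rainbow_joinable S" using rainbow_joinable_3set by blast
  then obtain F x where F: "F \<subseteq> LE" "inj_on col F" "x \<in> VG \<times> VH" "\<forall>s\<in>S. (x, s) \<in> (adj F)\<^sup>*"
    unfolding rainbow_joinable_def by blast
  from tree_containing_reachable[OF sgraph_mono_edges[OF lex_edges_sgraph[OF sgraph_G sgraph_H] F(1)] F(3,4)]
  obtain TV TE where T: "TV \<subseteq> VG \<times> VH" "TE \<subseteq> F" "is_tree TV TE" "S \<subseteq> TV" by blast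
  then show "\<exists>TV TE. TV \<subseteq> VG \<times> VH \<and> TE \<subseteq> LE \<and> is_tree TV TE \<and> S \<subseteq> TV \<and> inj_on col TE"
    using F(1) inj_on_subset[OF F(2) T(2)] by blast
qed

end

lemma ex_rainbow3_colouring_lex:
  assumes "sgraph VG EG" "gconnected VG EG" "card VG \<ge> 3"
    and "sgraph VH EH" "gconnected VH EH" "card VH \<ge> 2"
  shows "\<exists>C. rainbow3_colouring (VG \<times> VH) (lex_edges VG EG VH EH) (rx3 VG EG + rc VH EH) C"
proof -
  obtain k c where "rainbow3_colouring VG EG k c" using ex_rainbow3_colouring[OF assms(1,2)] by blast
  from rainbow3_colouring_rx3[OF this] obtain c where c: "rainbow3_colouring VG EG (rx3 VG EG) c" ..
  obtain r c' where "rainbow_colouring VH EH r c'" using ex_rainbow_colouring[OF assms(4,5)] by blast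
  from rainbow_colouring_rc[OF this] obtain c' where c': "rainbow_colouring VH EH (rc VH EH) c'" ..
  interpret lex_colouring VG EG VH EH "rx3 VG EG" c "rc VH EH" c'
    using assms(1,3,4,6) c c' by unfold_locales
  show ?thesis using rainbow3_colouring_lex by blast
qed

section \<open>The lower bound\<close>

lemma gdist_le_length:
  assumes "is_path V E xs" "hd xs = u" "last xs = v"
  shows "gdist V E u v \<le> length xs - 1"
proof -
  have "length xs = Suc (length xs - 1)" using assms(1) by (simp add: is_path_def)
  then show ?thesis unfolding gdist_def using assms by (intro Least_le) blast
qed

lemma lex_path_fst_relpow:
  assumes P: "is_path TV TE P" and TE: "TE \<subseteq> lex_edges VG EG VH EH" and i: "i < length P"
  shows "\<exists>n\<le>i. (fst (P ! 0), fst (P ! i)) \<in> (adj EG) ^^ n"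
  using i
proof (induction i)
  case (Suc i)
  then obtain n where n: "n \<le> i" "(fst (P ! 0), fst (P ! i)) \<in> (adj EG) ^^ n" by auto
  have "{P ! i, P ! Suc i} \<in> TE" using P Suc.prems by (simp add: is_path_def)
  then have "fst (P ! i) = fst (P ! Suc i) \<or> {fst (P ! i), fst (P ! Suc i)} \<in> EG"
    using TE lex_edges_fst[of "P ! i" "P ! Suc i"] by blast
  then show ?case
  proof
    assume "fst (P ! i) = fst (P ! Suc i)"
    then show ?case using n by (intro exI[of _ n]) auto
  next
    assume "{fst (P ! i), fst (P ! Suc i)} \<in> EG"
    then have "(fst (P ! 0), fst (P ! Suc i)) \<in> (adj EG) ^^ Suc n" using n(2) by auto
    then show ?case using n(1) by (intro exI[of _ "Suc n"]) auto
  qed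
qed simp

lemma lex_path_gdist_fst_le:
  assumes sG: "sgraph VG EG" and P: "is_path TV TE P" and TE: "TE \<subseteq> lex_edges VG EG VH EH"
    and TV: "TV \<subseteq> VG \<times> VH"
  shows "gdist VG EG (fst (hd P)) (fst (last P)) + 1 \<le> length P"
proof -
  have ne: "P \<noteq> []" using P by (simp add: is_path_def)
  obtain n where n: "n \<le> length P - 1" "(fst (P ! 0), fst (P ! (length P - 1))) \<in> (adj EG) ^^ n"
    using lex_path_fst_relpow[OF P TE, of "length P - 1"] ne by auto
  have "P ! 0 \<in> TV" using P ne by (auto simp: is_path_def)
  then have "fst (P ! 0) \<in> VG" using TV by auto
  moreover have "\<forall>e\<in>EG. e \<subseteq> VG" using sgraph_edge_subset[OF sG] by blast
  ultimately obtain xs where xs: "is_path VG EG xs"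
    "hd xs = fst (P ! 0)" "last xs = fst (P ! (length P - 1))" "length xs \<le> Suc n"
    using path_of_adj_relpow[OF n(2)] by blast
  have "gdist VG EG (fst (P ! 0)) (fst (P ! (length P - 1))) \<le> length xs - 1"
    by (rule gdist_le_length[OF xs(1-3)])
  moreover have "length P \<ge> 1" using ne by (cases P) auto
  ultimately have "gdist VG EG (fst (P ! 0)) (fst (P ! (length P - 1))) + 1 \<le> length P"
    using xs(4) n(1) by linarith
  then show ?thesis using ne by (simp add: hd_conv_nth last_conv_nth)
qed

lemma gdist_less_if_rainbow3_colouring_lex:
  assumes C: "rainbow3_colouring (VG \<times> VH) (lex_edges VG EG VH EH) K C" and sG: "sgraph VG EG"
    and u: "u \<in> VG" "v \<in> VG" "u \<noteq> v" and h: "h1 \<in> VH" "h2 \<in> VH" "h1 \<noteq> h2"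
  shows "gdist VG EG u v < K"
proof -
  let ?S = "{(u, h1), (v, h1), (v, h2)}"
  have "?S \<subseteq> VG \<times> VH" "card ?S = 3" using u h by auto
  then obtain TV TE where T: "TV \<subseteq> VG \<times> VH" "TE \<subseteq> lex_edges VG EG VH EH" "is_tree TV TE"
    "?S \<subseteq> TV" "inj_on C TE" "\<forall>e\<in>TE. C e < K"
    by (rule rainbow3_colouringE[OF C])
  have "gconnected TV TE" "(u, h1) \<in> TV" "(v, h1) \<in> TV" using T(3,4) by (auto simp: is_tree_def)
  then obtain P where P: "is_path TV TE P" "hd P = (u, h1)" "last P = (v, h1)"
    unfolding gconnected_def by metis
  have ne: "P \<noteq> []" and card_P: "card (set P) = length P" and sP: "set P \<subseteq> TV"
    using P(1) by (auto simp: is_path_def distinct_card)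
  \<comment> \<open>either (v, h2) lies off P, or P passes through it before reaching (v, h1)\<close>
  have "gdist VG EG u v + 2 \<le> card (insert (v, h2) (set P))"
  proof (cases "(v, h2) \<in> set P")
    case False
    then show ?thesis using lex_path_gdist_fst_le[OF sG P(1) T(2,1)] P(2,3) card_P by simp
  next
    case True
    then obtain i where i: "i < length P" "P ! i = (v, h2)" by (auto simp: in_set_conv_nth)
    have "i \<noteq> length P - 1" using i P(3) ne h(3) by (auto simp: last_conv_nth)
    then have "Suc i < length P" using i(1) by simp
    moreover have "is_path TV TE (take (Suc i) P)" using is_path_take[OF P(1)] by simp
    moreover have "hd (take (Suc i) P) = (u, h1)" using P(2) ne by simp
    moreover have "last (take (Suc i) P) = (v, h2)" using i by (simp add: take_Suc_conv_app_nth)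
    ultimately have "gdist VG EG u v + 2 \<le> length P"
      using lex_path_gdist_fst_le[OF sG _ T(2,1), of "take (Suc i) P"] by simp
    then show ?thesis using True card_P by (simp add: insert_absorb)
  qed
  also have "\<dots> \<le> K + 1" using T(4) sP by (intro card_le_Suc_if_rainbow_tree[OF T(3,5,6)]) auto
  finally show ?thesis by simp
qed

lemma ex_gdist_eq_diam:
  assumes "finite V" "V \<noteq> {}"
  obtains u v where "u \<in> V" "v \<in> V" "gdist V E u v = diam V E"
proof -
  let ?D = "{gdist V E u v | u v. u \<in> V \<and> v \<in> V}"
  have "?D \<subseteq> (\<lambda>p. gdist V E (fst p) (snd p)) ` (V \<times> V)"
  proof
    fix x assume "x \<in> ?D"
    then obtain u v where "x = gdist V E u v" "u \<in> V" "v \<in> V" by blast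
    then show "x \<in> (\<lambda>p. gdist V E (fst p) (snd p)) ` (V \<times> V)" by (intro image_eqI[of _ _ "(u, v)"]) auto
  qed
  then have "finite ?D" using assms(1) finite_subset by blast
  moreover have "?D \<noteq> {}" using assms(2) by blast
  ultimately have "Max ?D \<in> ?D" by (rule Max_in)
  then obtain u v where "u \<in> V" "v \<in> V" "Max ?D = gdist V E u v" by blast
  then show thesis by (intro that) (simp_all add: diam_def)
qed

lemma diam_less_if_rainbow3_colouring_lex:
  assumes C: "rainbow3_colouring (VG \<times> VH) (lex_edges VG EG VH EH) K C" and sG: "sgraph VG EG"
    and "card VG \<ge> 2" "card VH \<ge> 2"
  shows "diam VG EG < K"
proof -
  obtain h1 where "h1 \<in> VH" using \<open>card VH \<ge> 2\<close> by fastforce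
  moreover obtain h2 where "h2 \<in> VH" "h2 \<noteq> h1" using ex_other_elem[OF \<open>card VH \<ge> 2\<close>] by blast
  ultimately have h: "h1 \<in> VH" "h2 \<in> VH" "h1 \<noteq> h2" by auto
  have "finite VG" "VG \<noteq> {}" using \<open>card VG \<ge> 2\<close> by (auto intro: card_ge_0_finite)
  then obtain u v where uv: "u \<in> VG" "v \<in> VG" "gdist VG EG u v = diam VG EG"
    by (rule ex_gdist_eq_diam)
  show ?thesis
  proof (cases "u = v")
    case True
    have "diam VG EG = 0"
      using gdist_le_length[of VG EG "[u]" u u] uv True by (simp add: is_path_def)
    moreover obtain w where "w \<in> VG" "w \<noteq> u" using ex_other_elem[OF \<open>card VG \<ge> 2\<close>] by blast
    then have "gdist VG EG u w < K"
      using gdist_less_if_rainbow3_colouring_lex[OF C sG uv(1) _ _ h] by blast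
    ultimately show ?thesis by simp
  next
    case False
    then show ?thesis using gdist_less_if_rainbow3_colouring_lex[OF C sG uv(1,2) False h] uv(3) by simp
  qed
qed

theorem theorem7:
  fixes VG :: "'a set" and EG :: "'a set set" and VH :: "'b set" and EH :: "'b set set"
  assumes "sgraph VG EG" and "gconnected VG EG" and "card VG \<ge> 3"
    and "sgraph VH EH" and "gconnected VH EH" and "card VH \<ge> 2"
    and "\<not> complete_graph VG EG \<or> \<not> complete_graph VH EH"
  shows "rx3 (VG \<times> VH) (lex_edges VG EG VH EH) \<le> rx3 VG EG + rc VH EH \<and>
    (diam VG EG = rx3 VG EG \<and> complete_graph VH EH \<longrightarrow>
       rx3 (VG \<times> VH) (lex_edges VG EG VH EH) = rx3 VG EG + rc VH EH)"
proof -
  obtain C where C: "rainbow3_colouring (VG \<times> VH) (lex_edges VG EG VH EH) (rx3 VG EG + rc VH EH) C"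
    using ex_rainbow3_colouring_lex[OF assms(1-6)] by blast
  then have upper: "rx3 (VG \<times> VH) (lex_edges VG EG VH EH) \<le> rx3 VG EG + rc VH EH" by (rule rx3_le)
  obtain C' where "rainbow3_colouring (VG \<times> VH) (lex_edges VG EG VH EH) (rx3 (VG \<times> VH) (lex_edges VG EG VH EH)) C'"
    using rainbow3_colouring_rx3[OF C] by blast
  then have lower: "diam VG EG < rx3 (VG \<times> VH) (lex_edges VG EG VH EH)"
    by (rule diam_less_if_rainbow3_colouring_lex) (use assms(1,3,6) in auto)
  have "complete_graph VH EH \<Longrightarrow> rc VH EH = 1" using rc_complete_graph[OF _ assms(6)] .
  then show ?thesis using upper lower by auto
qed

end
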